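(* Let $A=(S^c)_{sa}$ with order unit $I$, and let $L(\phi)=\max_{i=1,2,3}\|\delta_i(\phi)\|_{\infty,\infty,1}$ for $\phi\in A$. Then $((A,I),L)$ is a compact quantum metric space. That is, $L$ is a seminorm on $A$ with the following properties: (i) $L(a)=0$ if and only if $a\in\mathbb R I$; (ii) the metric $\rho_L(\omega_1,\omega_2)=\sup\{|\omega_1(a)-\omega_2(a)|:L(a)\le1\}$ on the state space $S(A)$ induces the weak-$*$ topology.
   Context: Let $\mathbb T=\mathbb R/\mathbb Z$ and $e(t)=e^{2\pi it}$. Fix a positive integer $c$ and real numbers $\hbar,\mu,\nu$ with $\mu^2+\nu^2\ne0$. $S^c$ is the space of $C^\infty$ functions $\Phi:\mathbb R\times\mathbb T\times\mathbb Z\to\mathbb C$ satisfying two conditions: (a) $\Phi(x+k,y,p)=e(ckpy)\Phi(x,y,p)$ for all $k\in\mathbb Z$; (b) for every polynomial $P$ on $\mathbb Z$, every $m,n\ge0$ and every compact $K\subset\mathbb R\times\mathbb T$, the function $P(p)\,\partial_x^m\partial_y^n\Phi$ is bounded on $K\times\mathbb Z$. Product and involution on $S^c$: $$(\Phi\star\Psi)(x,y,p)=\sum_{q}\Phi(x-\hbar(q-p)\mu,\,y-\hbar(q-p)\nu,\,q)\,\Psi(x-\hbar q\mu,\,y-\hbar q\nu,\,p-q),$$ $$\Phi^*(x,y,p)=\overline{\Phi(x,y,-p)}.$$ These act faithfully on $L^2(\mathbb R\times\mathbb T\times\mathbb Z)$ via $$(\pi(\Phi)\xi)(x,y,p)=\sum_q\Phi(x-\hbar(q-2p)\mu,\,y-\hbar(q-2p)\nu,\,q)\,\xi(x,y,p-q).$$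 The norm closure of $\pi(S^c)$ is the quantum Heisenberg manifold. The C*-norm on $S^c$ is the operator norm, and $I=(x,y,p)\mapsto\delta_{p0}$ is the identity. An order unit space is a real partially ordered vector space with a distinguished element $e$ satisfying two properties: for every $a$ there is $r$ with $a\le re$; and if $a\le re$ for all $r\ge0$, then $a\le0$. $A=(S^c)_{sa}$ is an order unit space with the order inherited from the C*-algebra and the C*-norm. A state is a bounded linear functional $\omega$ with $\omega(I)=1=\|\omega\|$; $S(A)$ is the set of states. A compact quantum metric space is a pair consisting of an order unit space and a seminorm $L$ satisfying (i) and (ii) above (a Lip norm). The norm $\|\cdot\|_{\infty,\infty,1}$ is defined by $\|\phi\|_{\infty,\infty,1}=\sum_{p\in\mathbb Z}\sup_{x\in\mathbb R,y\in\mathbb T}|\phi(x,y,p)|$. The derivations are: $$\delta_1(\phi)=-\partial_x\phi,$$ $$\delta_2(\phi)(x,y,p)=2\pi icpx\,\phi(x,y,p)-\partial_y\phi(x,y,p),$$ $$\delta_3(\phi)(x,y,p)=2\pi ip\,\phi(x,y,p).$$ *)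

theory Defs
  imports "HOL-Analysis.Analysis" "HOL-Computational_Algebra.Polynomial"
begin

text \<open>Elements of S^c are functions Phi x y p with x real, y real (1-periodic, i.e. y in T),
p integer.\<close>
type_synonym qhf = "real \<Rightarrow> real \<Rightarrow> int \<Rightarrow> complex"

definition ee :: "real \<Rightarrow> complex" where
  "ee t = cis (2 * pi * t)"

definition smooth_xy :: "(real \<Rightarrow> real \<Rightarrow> complex) \<Rightarrow> bool" where
  "smooth_xy f \<longleftrightarrow> (\<exists>D::nat \<Rightarrow> nat \<Rightarrow> real \<Rightarrow> real \<Rightarrow> complex.
      D 0 0 = f \<and>
      (\<forall>m n x y. ((\<lambda>t. D m n t y) has_vector_derivative D (Suc m) n x y) (at x) \<and>
                 ((\<lambda>t. D m n x t) has_vector_derivative D m (Suc n) x y) (at y)) \<and>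
      (\<forall>m n. continuous_on UNIV (\<lambda>z. D m n (fst z) (snd z))))"

definition pdx :: "qhf \<Rightarrow> qhf" where
  "pdx \<Phi> = (\<lambda>x y p. vector_derivative (\<lambda>t. \<Phi> t y p) (at x))"

definition pdy :: "qhf \<Rightarrow> qhf" where
  "pdy \<Phi> = (\<lambda>x y p. vector_derivative (\<lambda>t. \<Phi> x t p) (at y))"

definition Sc :: "nat \<Rightarrow> qhf set" where
  "Sc c = {\<Phi>.
     (\<forall>p. smooth_xy (\<lambda>x y. \<Phi> x y p)) \<and>
     (\<forall>x y p. \<Phi> x (y + 1) p = \<Phi> x y p) \<and>
     (\<forall>k::int. \<forall>x y p. \<Phi> (x + of_int k) y p = ee (real c * of_int k * of_int p * y) * \<Phi> x y p) \<and>
     (\<forall>(P::real poly) m n (K::(real \<times> real) set). compact K \<longrightarrow>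
        (\<exists>B. \<forall>x y p. (x, y) \<in> K \<longrightarrow>
           norm (complex_of_real (poly P (of_int p)) * ((pdx ^^ m) ((pdy ^^ n) \<Phi>)) x y p) \<le> B))}"

definition qadd :: "qhf \<Rightarrow> qhf \<Rightarrow> qhf" where
  "qadd a b = (\<lambda>x y p. a x y p + b x y p)"

definition qscale :: "real \<Rightarrow> qhf \<Rightarrow> qhf" where
  "qscale r a = (\<lambda>x y p. complex_of_real r * a x y p)"

definition qstar :: "qhf \<Rightarrow> qhf" where
  "qstar \<Phi> = (\<lambda>x y p. cnj (\<Phi> x y (- p)))"

definition qI :: qhf where
  "qI = (\<lambda>x y p. if p = 0 then 1 else 0)"

definition Asa :: "nat \<Rightarrow> qhf set" where
  "Asa c = {\<Phi> \<in> Sc c. qstar \<Phi> = \<Phi>}"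

text \<open>L^2(R x T x Z): T represented by [0,1].\<close>
definition hmeas :: "((real \<times> real) \<times> int) measure" where
  "hmeas = (lborel \<Otimes>\<^sub>M restrict_space lborel {0..1}) \<Otimes>\<^sub>M count_space UNIV"

definition l2sq :: "((real \<times> real) \<times> int \<Rightarrow> complex) \<Rightarrow> ennreal" where
  "l2sq \<xi> = (\<integral>\<^sup>+ z. ennreal ((norm (\<xi> z))\<^sup>2) \<partial>hmeas)"

definition inL2 :: "((real \<times> real) \<times> int \<Rightarrow> complex) \<Rightarrow> bool" where
  "inL2 \<xi> \<longleftrightarrow> \<xi> \<in> borel_measurable hmeas \<and> l2sq \<xi> < \<infinity>"

definition l2norm :: "((real \<times> real) \<times> int \<Rightarrow> complex) \<Rightarrow> real" where
  "l2norm \<xi> = sqrt (enn2real (l2sq \<xi>))"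

definition piop :: "real \<Rightarrow> real \<Rightarrow> real \<Rightarrow> qhf \<Rightarrow> ((real \<times> real) \<times> int \<Rightarrow> complex)
                      \<Rightarrow> ((real \<times> real) \<times> int \<Rightarrow> complex)" where
  "piop h mu nu \<Phi> \<xi> = (\<lambda>((x, y), p). \<Sum>\<^sub>\<infinity>q\<in>UNIV.
      \<Phi> (x - h * of_int (q - 2 * p) * mu) (y - h * of_int (q - 2 * p) * nu) q * \<xi> ((x, y), p - q))"

definition cnorm :: "real \<Rightarrow> real \<Rightarrow> real \<Rightarrow> qhf \<Rightarrow> real" where
  "cnorm h mu nu \<Phi> = Sup {l2norm (piop h mu nu \<Phi> \<xi>) | \<xi>. inL2 \<xi> \<and> l2norm \<xi> \<le> 1}"

definition fnorm :: "nat \<Rightarrow> real \<Rightarrow> real \<Rightarrow> real \<Rightarrow> (qhf \<Rightarrow> real) \<Rightarrow> real" where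
  "fnorm c h mu nu \<omega> = Sup {\<bar>\<omega> a\<bar> | a. a \<in> Asa c \<and> cnorm h mu nu a \<le> 1}"

text \<open>States on A, represented as functions extensional on A (undefined outside A).\<close>
definition states :: "nat \<Rightarrow> real \<Rightarrow> real \<Rightarrow> real \<Rightarrow> (qhf \<Rightarrow> real) set" where
  "states c h mu nu = {\<omega>. \<omega> \<in> extensional (Asa c) \<and>
      (\<forall>a\<in>Asa c. \<forall>b\<in>Asa c. \<omega> (qadd a b) = \<omega> a + \<omega> b) \<and>
      (\<forall>r. \<forall>a\<in>Asa c. \<omega> (qscale r a) = r * \<omega> a) \<and>
      (\<exists>C. \<forall>a\<in>Asa c. \<bar>\<omega> a\<bar> \<le> C * cnorm h mu nu a) \<and>
      \<omega> qI = 1 \<and> fnorm c h mu nu \<omega> = 1}"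

definition norm_ii1 :: "qhf \<Rightarrow> real" where
  "norm_ii1 \<phi> = (\<Sum>\<^sub>\<infinity>p\<in>UNIV. Sup {norm (\<phi> x y p) | x y. True})"

definition delta1 :: "qhf \<Rightarrow> qhf" where
  "delta1 \<phi> = (\<lambda>x y p. - pdx \<phi> x y p)"

definition delta2 :: "nat \<Rightarrow> qhf \<Rightarrow> qhf" where
  "delta2 c \<phi> = (\<lambda>x y p. 2 * of_real pi * \<i> * of_nat c * of_int p * of_real x * \<phi> x y p - pdy \<phi> x y p)"

definition delta3 :: "qhf \<Rightarrow> qhf" where
  "delta3 \<phi> = (\<lambda>x y p. 2 * of_real pi * \<i> * of_int p * \<phi> x y p)"

definition Lip :: "nat \<Rightarrow> qhf \<Rightarrow> real" where
  "Lip c \<phi> = max (norm_ii1 (delta1 \<phi>)) (max (norm_ii1 (delta2 c \<phi>)) (norm_ii1 (delta3 \<phi>)))"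

definition rhoL :: "nat \<Rightarrow> (qhf \<Rightarrow> real) \<Rightarrow> (qhf \<Rightarrow> real) \<Rightarrow> ereal" where
  "rhoL c \<omega>1 \<omega>2 = (SUP a\<in>{a \<in> Asa c. Lip c a \<le> 1}. ereal \<bar>\<omega>1 a - \<omega>2 a\<bar>)"

definition dist_topology :: "'a set \<Rightarrow> ('a \<Rightarrow> 'a \<Rightarrow> ereal) \<Rightarrow> 'a topology" where
  "dist_topology S d = topology (\<lambda>U. U \<subseteq> S \<and>
      (\<forall>x\<in>U. \<exists>e>0. \<forall>y\<in>S. d x y < ereal e \<longrightarrow> y \<in> U))"

definition weak_star_topology :: "nat \<Rightarrow> (qhf \<Rightarrow> real) set \<Rightarrow> (qhf \<Rightarrow> real) topology" where
  "weak_star_topology c S = subtopology (product_topology (\<lambda>_. euclideanreal) (Asa c)) S"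

end

theory Submission
  imports Defs
begin

text \<open>
  The operator \<open>\<pi>(\<phi>)\<close> is a convolution in the discrete variable, so by Young's inequality
  its norm is at most \<open>norm_ii1 \<phi>\<close>, and therefore \<open>|\<omega> a| \<le> norm_ii1 a\<close> for every state.
  The modulus of an element of \<open>S\<^sup>c\<close> is \<open>1\<close>-periodic in \<open>x\<close> and \<open>y\<close>, so suprema may be taken
  over the unit square, where the polynomial bounds in the definition of \<open>S\<^sup>c\<close> give decay
  \<open>1 / (1 + p\<^sup>2)\<close> for the element and its derivations.

  \<open>Lip a = 0\<close> forces \<open>\<delta>\<^sub>3 a = 0\<close>, so \<open>a\<close> lives on \<open>p = 0\<close>, where \<open>\<delta>\<^sub>1 a = \<delta>\<^sub>2 a = 0\<close> make it
  constant. Subtracting a real multiple of the unit, every \<open>a\<close> with \<open>Lip a \<le> 1\<close> may be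
  assumed to vanish at the origin. Then \<open>\<delta>\<^sub>1, \<delta>\<^sub>2\<close> make each slice Lipschitz on the unit square
  and \<open>\<delta>\<^sub>3\<close> bounds the slice \<open>p\<close> by \<open>sup |\<delta>\<^sub>3 a| / |p|\<close>. This bounds \<open>norm_ii1 a\<close> uniformly,
  so \<open>\<rho>\<^sub>L\<close> is finite, and it makes these elements totally bounded for \<open>norm_ii1\<close>:
  the slices with \<open>|p| > N\<close> contribute at most \<open>2 / N\<close>, and the remaining ones are determined
  up to a small error by their values, rounded to a mesh \<open>\<eta>\<close>, at the points of a finite grid.
  A finite net places a weak-* neighbourhood inside every \<open>\<rho>\<^sub>L\<close>-ball, while
  \<open>|\<omega> a - \<omega>' a| \<le> Lip a * \<rho>\<^sub>L \<omega> \<omega>'\<close> gives the converse inclusion.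
\<close>

section \<open>Partial derivatives of elements of the smooth algebra\<close>

lemma norm_diff_le_by_derivative_bound:
  fixes f f' :: "real \<Rightarrow> 'a::real_normed_vector"
  assumes "\<And>t. t \<in> {a..b} \<Longrightarrow> (f has_vector_derivative f' t) (at t)"
    and "\<And>t. t \<in> {a..b} \<Longrightarrow> norm (f' t) \<le> B"
    and "x \<in> {a..b}" "y \<in> {a..b}"
  shows "norm (f x - f y) \<le> B * \<bar>x - y\<bar>"
proof -
  have "norm (f x - f y) \<le> B * norm (x - y)"
    by (rule differentiable_bound[where S="{a..b}" and f'="\<lambda>t h. h *\<^sub>R f' t"])
      (use assms in \<open>auto simp: has_vector_derivative_def onorm_scaleR_left onorm_id
                          intro: has_derivative_at_withinI\<close>)
  then show ?thesis by simp
qed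

lemma constant_if_vector_derivative_0:
  fixes f :: "real \<Rightarrow> 'a::real_normed_vector"
  assumes "\<And>t. (f has_vector_derivative 0) (at t)"
  shows "f x = f y"
  using norm_diff_le_by_derivative_bound[of "min x y" "max x y" f "\<lambda>_. 0" 0 x y] assms by auto

lemma periodic_of_int:
  fixes f :: "real \<Rightarrow> 'a"
  assumes "\<And>y. f (y + 1) = f y"
  shows "f (y + of_int l) = f y"
proof (induction l arbitrary: y rule: int_induct[where k=0])
  case (step1 i)
  then show ?case using assms[of "y + of_int i"] by (simp add: add.assoc)
next
  case (step2 i)
  then show ?case using assms[of "y + of_int (i - 1)"] by (simp add: add.assoc)
qed simp

definition partials_family :: "(nat \<Rightarrow> nat \<Rightarrow> real \<Rightarrow> real \<Rightarrow> complex) \<Rightarrow> bool" where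
  "partials_family D \<longleftrightarrow>
     (\<forall>m n x y. ((\<lambda>t. D m n t y) has_vector_derivative D (Suc m) n x y) (at x) \<and>
                ((\<lambda>t. D m n x t) has_vector_derivative D m (Suc n) x y) (at y))"

lemma smooth_xy_iff:
  "smooth_xy f \<longleftrightarrow> (\<exists>D. D 0 0 = f \<and> partials_family D \<and>
                           (\<forall>m n. continuous_on UNIV (\<lambda>z. D m n (fst z) (snd z))))"
  unfolding smooth_xy_def partials_family_def ..

lemma partials_familyD:
  assumes "partials_family D"
  shows "((\<lambda>t. D m n t y) has_vector_derivative D (Suc m) n x y) (at x)"
    and "((\<lambda>t. D m n x t) has_vector_derivative D m (Suc n) x y) (at y)"
  using assms unfolding partials_family_def by blast+

lemma iterated_partials_eq:
  assumes D: "partials_family D" and D0: "D 0 0 = (\<lambda>x y. \<Phi> x y p)"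
  shows "(pdx ^^ m) ((pdy ^^ n) \<Phi>) x y p = D m n x y"
proof (induction m arbitrary: x y)
  case 0
  show ?case
  proof (induction n arbitrary: x y)
    case (Suc n)
    have "(pdy ^^ Suc n) \<Phi> x y p = vector_derivative (\<lambda>t. (pdy ^^ n) \<Phi> x t p) (at y)"
      by (simp only: funpow.simps o_apply pdy_def)
    also have "(\<lambda>t. (pdy ^^ n) \<Phi> x t p) = (\<lambda>t. D 0 n x t)" using Suc by simp
    finally show ?case using vector_derivative_at[OF partials_familyD(2)[OF D]] by simp
  qed (simp add: D0)
next
  case (Suc m)
  have "(pdx ^^ Suc m) ((pdy ^^ n) \<Phi>) x y p
        = vector_derivative (\<lambda>t. (pdx ^^ m) ((pdy ^^ n) \<Phi>) t y p) (at x)"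
    by (simp only: funpow.simps o_apply pdx_def)
  also have "(\<lambda>t. (pdx ^^ m) ((pdy ^^ n) \<Phi>) t y p) = (\<lambda>t. D m n t y)" using Suc by simp
  finally show ?case using vector_derivative_at[OF partials_familyD(1)[OF D]] by simp
qed

lemma smooth_xy_partials:
  assumes "smooth_xy (\<lambda>x y. \<Phi> x y p)"
  shows "((\<lambda>t. \<Phi> t y p) has_vector_derivative pdx \<Phi> x y p) (at x)"
    and "((\<lambda>t. \<Phi> x t p) has_vector_derivative pdy \<Phi> x y p) (at y)"
proof -
  obtain D where D: "partials_family D" and D0: "D 0 0 = (\<lambda>x y. \<Phi> x y p)"
    using assms unfolding smooth_xy_iff by blast
  have "pdx \<Phi> x y p = D 1 0 x y" "pdy \<Phi> x y p = D 0 1 x y"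
    using iterated_partials_eq[where \<Phi>=\<Phi> and p=p, OF D D0, of 1 0]
      iterated_partials_eq[where \<Phi>=\<Phi> and p=p, OF D D0, of 0 1]
    by simp_all
  then show "((\<lambda>t. \<Phi> t y p) has_vector_derivative pdx \<Phi> x y p) (at x)"
    and "((\<lambda>t. \<Phi> x t p) has_vector_derivative pdy \<Phi> x y p) (at y)"
    using partials_familyD[OF D, of 0 0] D0 by (simp_all add: fun_eq_iff)
qed

lemma ScD:
  assumes "\<Phi> \<in> Sc c"
  shows Sc_smooth: "smooth_xy (\<lambda>x y. \<Phi> x y p)"
    and Sc_periodic_y: "\<Phi> x (y + 1) p = \<Phi> x y p"
    and Sc_quasi_periodic_x: "\<Phi> (x + of_int k) y p = ee (real c * of_int k * of_int p * y) * \<Phi> x y p"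
    and Sc_bounded_on_compact: "compact K \<Longrightarrow> \<exists>B. \<forall>x y p. (x, y) \<in> K \<longrightarrow>
           norm (complex_of_real (poly P (of_int p)) * ((pdx ^^ m) ((pdy ^^ n) \<Phi>)) x y p) \<le> B"
  using assms unfolding Sc_def by (auto dest: CollectD)

lemma Sc_has_pdx: "\<Phi> \<in> Sc c \<Longrightarrow> ((\<lambda>t. \<Phi> t y p) has_vector_derivative pdx \<Phi> x y p) (at x)"
  by (rule smooth_xy_partials(1)[OF Sc_smooth])

lemma Sc_has_pdy: "\<Phi> \<in> Sc c \<Longrightarrow> ((\<lambda>t. \<Phi> x t p) has_vector_derivative pdy \<Phi> x y p) (at y)"
  by (rule smooth_xy_partials(2)[OF Sc_smooth])

lemma Sc_periodic_y_int: "\<Phi> \<in> Sc c \<Longrightarrow> \<Phi> x (y + of_int l) p = \<Phi> x y p"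
  using periodic_of_int[where f="\<lambda>y. \<Phi> x y p"] Sc_periodic_y by metis

lemma norm_ee [simp]: "norm (ee t) = 1"
  by (simp add: ee_def)

lemma ee_has_vector_derivative:
  "((\<lambda>t. ee (a * t)) has_vector_derivative 2 * of_real pi * \<i> * of_real a * ee (a * y)) (at y)"
proof -
  have "((\<lambda>t. exp (\<i> * (2 * of_real pi * of_real a * of_real t))) has_vector_derivative
          \<i> * (2 * of_real pi * of_real a) * exp (\<i> * (2 * of_real pi * of_real a * of_real y))) (at y)"
    by (rule has_vector_derivative_real_field) (auto intro!: derivative_eq_intros)
  then show ?thesis
    by (simp add: ee_def cis_conv_exp algebra_simps)
qed

lemma pdx_quasi_periodic_x:
  assumes "\<Phi> \<in> Sc c"
  shows "pdx \<Phi> (x + of_int k) y p = ee (real c * of_int k * of_int p * y) * pdx \<Phi> x y p"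
proof -
  have "((\<lambda>t. \<Phi> (t + of_int k) y p) has_vector_derivative pdx \<Phi> (x + of_int k) y p) (at x)"
    using vector_diff_chain_at[OF has_vector_derivative_add_const[THEN iffD2, OF has_vector_derivative_id]
        Sc_has_pdx[OF assms]]
    by (simp add: o_def)
  moreover have "((\<lambda>t. \<Phi> (t + of_int k) y p) has_vector_derivative
                   ee (real c * of_int k * of_int p * y) * pdx \<Phi> x y p) (at x)"
    using has_vector_derivative_mult_right[OF Sc_has_pdx[OF assms]] Sc_quasi_periodic_x[OF assms]
    by simp
  ultimately show ?thesis by (rule vector_derivative_unique_at)
qed

lemma pdy_quasi_periodic_x:
  assumes "\<Phi> \<in> Sc c"
  shows "pdy \<Phi> (x + of_int k) y p = ee (real c * of_int k * of_int p * y) *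
           (2 * of_real pi * \<i> * of_real (real c * of_int k * of_int p) * \<Phi> x y p + pdy \<Phi> x y p)"
proof -
  define a where "a = real c * of_int k * of_int p"
  have "((\<lambda>t. ee (a * t) * \<Phi> x t p) has_vector_derivative
          ee (a * y) * pdy \<Phi> x y p + 2 * of_real pi * \<i> * of_real a * ee (a * y) * \<Phi> x y p) (at y)"
    by (rule has_vector_derivative_mult[OF ee_has_vector_derivative Sc_has_pdy[OF assms]])
  moreover have "(\<lambda>t. \<Phi> (x + of_int k) t p) = (\<lambda>t. ee (a * t) * \<Phi> x t p)"
    using Sc_quasi_periodic_x[OF assms] by (simp add: a_def mult.assoc)
  ultimately have "pdy \<Phi> (x + of_int k) y p =
      ee (a * y) * pdy \<Phi> x y p + 2 * of_real pi * \<i> * of_real a * ee (a * y) * \<Phi> x y p"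
    unfolding pdy_def by (simp add: vector_derivative_at)
  then show ?thesis by (simp add: a_def algebra_simps)
qed

lemma pdx_periodic_y: "\<Phi> \<in> Sc c \<Longrightarrow> pdx \<Phi> x (y + of_int l) p = pdx \<Phi> x y p"
  by (simp add: pdx_def Sc_periodic_y_int)

lemma pdy_periodic_y:
  assumes "\<Phi> \<in> Sc c"
  shows "pdy \<Phi> x (y + of_int l) p = pdy \<Phi> x y p"
proof -
  have "((\<lambda>t. \<Phi> x (t + of_int l) p) has_vector_derivative pdy \<Phi> x (y + of_int l) p) (at y)"
    using vector_diff_chain_at[OF has_vector_derivative_add_const[THEN iffD2, OF has_vector_derivative_id]
        Sc_has_pdy[OF assms]]
    by (simp add: o_def)
  then have "((\<lambda>t. \<Phi> x t p) has_vector_derivative pdy \<Phi> x (y + of_int l) p) (at y)"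
    using Sc_periodic_y_int[OF assms] by simp
  then show ?thesis using Sc_has_pdy[OF assms] by (rule vector_derivative_unique_at)
qed

lemma iterated_partials_qadd:
  assumes "\<And>p. smooth_xy (\<lambda>x y. a x y p)" and "\<And>p. smooth_xy (\<lambda>x y. b x y p)"
  shows "smooth_xy (\<lambda>x y. qadd a b x y p)"
    and "(pdx ^^ m) ((pdy ^^ n) (qadd a b)) x y p =
           (pdx ^^ m) ((pdy ^^ n) a) x y p + (pdx ^^ m) ((pdy ^^ n) b) x y p"
proof -
  obtain Da where Da: "partials_family Da" "Da 0 0 = (\<lambda>x y. a x y p)"
    and Da_cont: "\<forall>m n. continuous_on UNIV (\<lambda>z. Da m n (fst z) (snd z))"
    using assms(1) unfolding smooth_xy_iff by blast
  obtain Db where Db: "partials_family Db" "Db 0 0 = (\<lambda>x y. b x y p)"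
    and Db_cont: "\<forall>m n. continuous_on UNIV (\<lambda>z. Db m n (fst z) (snd z))"
    using assms(2) unfolding smooth_xy_iff by blast
  define D where "D = (\<lambda>m n x y. Da m n x y + Db m n x y)"
  have D: "partials_family D" "D 0 0 = (\<lambda>x y. qadd a b x y p)"
    using Da Db by (auto simp: partials_family_def D_def qadd_def intro: has_vector_derivative_add)
  moreover have "\<forall>m n. continuous_on UNIV (\<lambda>z. D m n (fst z) (snd z))"
    using Da_cont Db_cont by (simp add: D_def continuous_on_add)
  ultimately show "smooth_xy (\<lambda>x y. qadd a b x y p)"
    unfolding smooth_xy_iff by blast
  show "(pdx ^^ m) ((pdy ^^ n) (qadd a b)) x y p =
          (pdx ^^ m) ((pdy ^^ n) a) x y p + (pdx ^^ m) ((pdy ^^ n) b) x y p"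
    using iterated_partials_eq[where \<Phi>="qadd a b", OF D] iterated_partials_eq[where \<Phi>=a, OF Da]
      iterated_partials_eq[where \<Phi>=b, OF Db]
    by (simp add: D_def)
qed

lemma iterated_partials_qscale:
  assumes "\<And>p. smooth_xy (\<lambda>x y. a x y p)"
  shows "smooth_xy (\<lambda>x y. qscale r a x y p)"
    and "(pdx ^^ m) ((pdy ^^ n) (qscale r a)) x y p = of_real r * (pdx ^^ m) ((pdy ^^ n) a) x y p"
proof -
  obtain Da where Da: "partials_family Da" "Da 0 0 = (\<lambda>x y. a x y p)"
    and Da_cont: "\<forall>m n. continuous_on UNIV (\<lambda>z. Da m n (fst z) (snd z))"
    using assms unfolding smooth_xy_iff by blast
  define D where "D = (\<lambda>m n x y. of_real r * Da m n x y)"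
  have D: "partials_family D" "D 0 0 = (\<lambda>x y. qscale r a x y p)"
    using Da by (auto simp: partials_family_def D_def qscale_def intro: has_vector_derivative_mult_right)
  moreover have "\<forall>m n. continuous_on UNIV (\<lambda>z. D m n (fst z) (snd z))"
    using Da_cont by (simp add: D_def continuous_on_mult_left)
  ultimately show "smooth_xy (\<lambda>x y. qscale r a x y p)"
    unfolding smooth_xy_iff by blast
  show "(pdx ^^ m) ((pdy ^^ n) (qscale r a)) x y p = of_real r * (pdx ^^ m) ((pdy ^^ n) a) x y p"
    using iterated_partials_eq[where \<Phi>="qscale r a", OF D] iterated_partials_eq[where \<Phi>=a, OF Da]
    by (simp add: D_def)
qed

lemma iterated_partials_qI:
  shows "smooth_xy (\<lambda>x y. qI x y p)"
    and "(pdx ^^ m) ((pdy ^^ n) qI) x y p = (if m = 0 \<and> n = 0 then qI x y p else 0)"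
proof -
  define D :: "nat \<Rightarrow> nat \<Rightarrow> real \<Rightarrow> real \<Rightarrow> complex"
    where "D = (\<lambda>m n x y. if m = 0 \<and> n = 0 \<and> p = 0 then 1 else 0)"
  have D: "partials_family D" "D 0 0 = (\<lambda>x y. qI x y p)"
    by (simp_all add: partials_family_def D_def qI_def)
  moreover have "\<forall>m n. continuous_on UNIV (\<lambda>z. D m n (fst z) (snd z))"
    by (simp add: D_def)
  ultimately show "smooth_xy (\<lambda>x y. qI x y p)"
    unfolding smooth_xy_iff by blast
  show "(pdx ^^ m) ((pdy ^^ n) qI) x y p = (if m = 0 \<and> n = 0 then qI x y p else 0)"
    using iterated_partials_eq[where \<Phi>=qI, OF D] by (simp add: D_def qI_def)
qed

lemma Sc_qadd:
  assumes a: "a \<in> Sc c" and b: "b \<in> Sc c"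
  shows "qadd a b \<in> Sc c"
proof -
  have "\<exists>B. \<forall>x y p. (x, y) \<in> K \<longrightarrow>
          norm (of_real (poly P (of_int p)) * (pdx ^^ m) ((pdy ^^ n) (qadd a b)) x y p) \<le> B"
    if "compact K" for P m n K
  proof -
    obtain Ba where Ba: "\<forall>x y p. (x, y) \<in> K \<longrightarrow>
        norm (of_real (poly P (of_int p)) * (pdx ^^ m) ((pdy ^^ n) a) x y p) \<le> Ba"
      using Sc_bounded_on_compact[OF a \<open>compact K\<close>] by blast
    obtain Bb where Bb: "\<forall>x y p. (x, y) \<in> K \<longrightarrow>
        norm (of_real (poly P (of_int p)) * (pdx ^^ m) ((pdy ^^ n) b) x y p) \<le> Bb"
      using Sc_bounded_on_compact[OF b \<open>compact K\<close>] by blast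
    have "norm (of_real (poly P (of_int p)) * (pdx ^^ m) ((pdy ^^ n) (qadd a b)) x y p) \<le> Ba + Bb"
      if "(x, y) \<in> K" for x y p
      using Ba Bb that iterated_partials_qadd(2)[where a=a and b=b, OF Sc_smooth[OF a] Sc_smooth[OF b]]
      by (simp add: distrib_left) (meson add_mono norm_triangle_le)
    then show ?thesis by blast
  qed
  then show ?thesis
    using iterated_partials_qadd(1)[where a=a and b=b, OF Sc_smooth[OF a] Sc_smooth[OF b]]
      Sc_periodic_y[OF a] Sc_periodic_y[OF b] Sc_quasi_periodic_x[OF a] Sc_quasi_periodic_x[OF b]
    unfolding Sc_def by (simp add: qadd_def distrib_left)
qed

lemma Sc_qscale:
  assumes a: "a \<in> Sc c"
  shows "qscale r a \<in> Sc c"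
proof -
  have "\<exists>B. \<forall>x y p. (x, y) \<in> K \<longrightarrow>
          norm (of_real (poly P (of_int p)) * (pdx ^^ m) ((pdy ^^ n) (qscale r a)) x y p) \<le> B"
    if "compact K" for P m n K
  proof -
    obtain Ba where Ba: "\<forall>x y p. (x, y) \<in> K \<longrightarrow>
        norm (of_real (poly P (of_int p)) * (pdx ^^ m) ((pdy ^^ n) a) x y p) \<le> Ba"
      using Sc_bounded_on_compact[OF a \<open>compact K\<close>] by blast
    have "norm (of_real (poly P (of_int p)) * (pdx ^^ m) ((pdy ^^ n) (qscale r a)) x y p) \<le> \<bar>r\<bar> * Ba"
      if "(x, y) \<in> K" for x y p
      using Ba that iterated_partials_qscale(2)[where a=a, OF Sc_smooth[OF a]]
      by (auto simp: norm_mult mult.left_commute intro!: mult_left_mono)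
    then show ?thesis by blast
  qed
  then show ?thesis
    using iterated_partials_qscale(1)[where a=a, OF Sc_smooth[OF a]] Sc_periodic_y[OF a] Sc_quasi_periodic_x[OF a]
    unfolding Sc_def by (simp add: qscale_def)
qed

lemma qI_in_Sc: "qI \<in> Sc c"
  unfolding Sc_def
proof (intro CollectI conjI allI impI)
  fix P :: "real poly" and m n :: nat and K :: "(real \<times> real) set"
  have "norm (of_real (poly P (of_int p)) * (pdx ^^ m) ((pdy ^^ n) qI) x y p) \<le> \<bar>poly P 0\<bar>"
    for x y p
    using iterated_partials_qI(2)[of m n x y p] by (auto simp: qI_def)
  then show "\<exists>B. \<forall>x y p. (x, y) \<in> K \<longrightarrow>
               norm (of_real (poly P (of_int p)) * (pdx ^^ m) ((pdy ^^ n) qI) x y p) \<le> B"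
    by blast
qed (rule iterated_partials_qI(1), simp_all add: qI_def ee_def)

lemma pdx_qadd:
  assumes "a \<in> Sc c" "b \<in> Sc c"
  shows "pdx (qadd a b) = qadd (pdx a) (pdx b)"
  using iterated_partials_qadd(2)[where a=a and b=b, OF Sc_smooth[OF assms(1)] Sc_smooth[OF assms(2)], where m=1 and n=0]
  by (simp add: fun_eq_iff qadd_def)

lemma pdy_qadd:
  assumes "a \<in> Sc c" "b \<in> Sc c"
  shows "pdy (qadd a b) = qadd (pdy a) (pdy b)"
  using iterated_partials_qadd(2)[where a=a and b=b, OF Sc_smooth[OF assms(1)] Sc_smooth[OF assms(2)], where m=0 and n=1]
  by (simp add: fun_eq_iff qadd_def)

lemma pdx_qscale:
  assumes "a \<in> Sc c"
  shows "pdx (qscale r a) = qscale r (pdx a)"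
  using iterated_partials_qscale(2)[where a=a, OF Sc_smooth[OF assms], where m=1 and n=0]
  by (simp add: fun_eq_iff qscale_def)

lemma pdy_qscale:
  assumes "a \<in> Sc c"
  shows "pdy (qscale r a) = qscale r (pdy a)"
  using iterated_partials_qscale(2)[where a=a, OF Sc_smooth[OF assms], where m=0 and n=1]
  by (simp add: fun_eq_iff qscale_def)

lemma delta_qadd:
  assumes "a \<in> Sc c" "b \<in> Sc c"
  shows "delta1 (qadd a b) = qadd (delta1 a) (delta1 b)"
    and "delta2 c (qadd a b) = qadd (delta2 c a) (delta2 c b)"
    and "delta3 (qadd a b) = qadd (delta3 a) (delta3 b)"
  using pdx_qadd[OF assms] pdy_qadd[OF assms]
  by (auto simp: delta1_def delta2_def delta3_def qadd_def fun_eq_iff algebra_simps)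

lemma delta_qscale:
  assumes "a \<in> Sc c"
  shows "delta1 (qscale r a) = qscale r (delta1 a)"
    and "delta2 c (qscale r a) = qscale r (delta2 c a)"
    and "delta3 (qscale r a) = qscale r (delta3 a)"
  using pdx_qscale[OF assms] pdy_qscale[OF assms]
  by (auto simp: delta1_def delta2_def delta3_def qscale_def fun_eq_iff algebra_simps)

lemma delta_qI: "delta1 qI = (\<lambda>x y p. 0)" "delta2 c qI = (\<lambda>x y p. 0)" "delta3 qI = (\<lambda>x y p. 0)"
  using iterated_partials_qI(2)[where m=1 and n=0] iterated_partials_qI(2)[where m=0 and n=1]
  by (auto simp: delta1_def delta2_def delta3_def qI_def fun_eq_iff)

lemma Asa_Sc: "a \<in> Asa c \<Longrightarrow> a \<in> Sc c"
  by (simp add: Asa_def)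

lemma Asa_qadd: "a \<in> Asa c \<Longrightarrow> b \<in> Asa c \<Longrightarrow> qadd a b \<in> Asa c"
  unfolding Asa_def using Sc_qadd by (auto simp: qstar_def qadd_def fun_eq_iff)

lemma Asa_qscale: "a \<in> Asa c \<Longrightarrow> qscale r a \<in> Asa c"
  unfolding Asa_def using Sc_qscale by (auto simp: qstar_def qscale_def fun_eq_iff)

lemma qI_in_Asa: "qI \<in> Asa c"
  unfolding Asa_def using qI_in_Sc by (auto simp: qstar_def qI_def fun_eq_iff)

lemma Asa_real_at_0:
  assumes "a \<in> Asa c"
  shows "a x y 0 = of_real (Re (a x y 0))"
proof -
  have "cnj (a x y 0) = a x y 0"
    using assms unfolding Asa_def qstar_def by (metis (mono_tags, lifting) mem_Collect_eq minus_zero)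
  then show ?thesis by (simp add: complex_eq_iff)
qed


section \<open>Decay in the discrete variable and the norm \<open>norm_ii1\<close>\<close>

lemma summable_inverse_one_plus_square_int:
  "(\<lambda>p::int. 1 / (1 + (real_of_int p)\<^sup>2)) summable_on UNIV"
proof -
  let ?f = "\<lambda>p::int. 1 / (1 + (real_of_int p)\<^sup>2)"
  have "summable (\<lambda>n::nat. 1 / (1 + (real n)\<^sup>2))"
    by (rule summable_comparison_test'[OF inverse_power_summable[of 2], where N=1])
      (auto simp: divide_simps add_pos_nonneg)
  then have nat: "(\<lambda>n::nat. 1 / (1 + (real n)\<^sup>2)) summable_on UNIV"
    by (subst summable_on_UNIV_nonneg_real_iff) auto
  have "?f summable_on range int"
    by (subst summable_on_reindex) (use nat in \<open>auto simp: o_def\<close>)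
  moreover have "?f summable_on range (\<lambda>n. - int n)"
    by (subst summable_on_reindex) (use nat in \<open>auto simp: o_def inj_on_def\<close>)
  moreover have "range int \<union> range (\<lambda>n. - int n) = UNIV"
    by (auto simp: image_iff) (metis int_cases2)
  ultimately show ?thesis
    by (metis summable_on_union)
qed

definition slice_sup :: "qhf \<Rightarrow> int \<Rightarrow> real" where
  "slice_sup g p = Sup {norm (g x y p) | x y. True}"

definition decaying :: "qhf \<Rightarrow> bool" where
  "decaying g \<longleftrightarrow> (\<exists>B. \<forall>x y p. norm (g x y p) \<le> B / (1 + (real_of_int p)\<^sup>2))"

lemma norm_ii1_eq_infsum_slice_sup: "norm_ii1 g = infsum (slice_sup g) UNIV"
  unfolding norm_ii1_def slice_sup_def ..

lemma slice_sup_le: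
  assumes "\<And>x y. norm (g x y p) \<le> B"
  shows "slice_sup g p \<le> B"
  unfolding slice_sup_def using assms by (intro cSup_least) auto

lemma bdd_above_slice:
  assumes "decaying g"
  shows "bdd_above {norm (g x y p) | x y. True}"
  using assms unfolding decaying_def bdd_above_def by blast

lemma decaying_slice_sup:
  assumes "decaying g"
  shows norm_le_slice_sup: "norm (g x y p) \<le> slice_sup g p"
    and slice_sup_nonneg: "0 \<le> slice_sup g p"
    and slice_sup_summable: "slice_sup g summable_on UNIV"
proof -
  obtain B where B: "\<And>x y p. norm (g x y p) \<le> B / (1 + (real_of_int p)\<^sup>2)"
    using assms unfolding decaying_def by blast
  show le: "norm (g x y p) \<le> slice_sup g p" for x y p
    unfolding slice_sup_def using bdd_above_slice[OF assms] by (intro cSup_upper) auto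
  show "0 \<le> slice_sup g p" for p
    using le[of 0 0 p] norm_ge_zero order_trans by blast
  have "slice_sup g p \<le> B * (1 / (1 + (real_of_int p)\<^sup>2))" for p
    using B by (intro slice_sup_le) simp
  then show "slice_sup g summable_on UNIV"
    using le[of 0 0] norm_ge_zero order_trans
    by (intro summable_on_comparison_test[OF summable_on_cmult_right[OF summable_inverse_one_plus_square_int]])
      blast+
qed

lemma norm_ii1_nonneg: "decaying g \<Longrightarrow> 0 \<le> norm_ii1 g"
  unfolding norm_ii1_eq_infsum_slice_sup by (intro infsum_nonneg slice_sup_nonneg)

lemma slice_sup_le_norm_ii1:
  assumes "decaying g"
  shows "slice_sup g p \<le> norm_ii1 g"
proof -
  have "infsum (slice_sup g) {p} \<le> infsum (slice_sup g) UNIV"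
    using assms by (intro infsum_mono_neutral slice_sup_summable slice_sup_nonneg) auto
  then show ?thesis unfolding norm_ii1_eq_infsum_slice_sup by simp
qed

lemma norm_le_norm_ii1: "decaying g \<Longrightarrow> norm (g x y p) \<le> norm_ii1 g"
  using norm_le_slice_sup slice_sup_le_norm_ii1 order_trans by blast

lemma decaying_qadd: "decaying f \<Longrightarrow> decaying g \<Longrightarrow> decaying (qadd f g)"
  unfolding decaying_def qadd_def
  by (metis (no_types, opaque_lifting) add_divide_distrib add_mono norm_triangle_le)

lemma decaying_qscale: "decaying f \<Longrightarrow> decaying (qscale r f)"
  unfolding decaying_def qscale_def
  by (metis (no_types, opaque_lifting) abs_ge_zero mult_left_mono norm_mult norm_of_real times_divide_eq_right)

lemma norm_ii1_qadd_le:
  assumes f: "decaying f" and g: "decaying g"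
  shows "norm_ii1 (qadd f g) \<le> norm_ii1 f + norm_ii1 g"
proof -
  have "slice_sup (qadd f g) p \<le> slice_sup f p + slice_sup g p" for p
    unfolding qadd_def
    by (intro slice_sup_le order_trans[OF norm_triangle_ineq] add_mono norm_le_slice_sup f g)
  then have "infsum (slice_sup (qadd f g)) UNIV \<le> infsum (\<lambda>p. slice_sup f p + slice_sup g p) UNIV"
    by (intro infsum_mono summable_on_add slice_sup_summable decaying_qadd f g)
  also have "\<dots> = infsum (slice_sup f) UNIV + infsum (slice_sup g) UNIV"
    by (intro infsum_add slice_sup_summable f g)
  finally show ?thesis unfolding norm_ii1_eq_infsum_slice_sup .
qed

lemma slice_sup_qscale:
  assumes "decaying f"
  shows "slice_sup (qscale r f) p = \<bar>r\<bar> * slice_sup f p"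
proof -
  have "{norm (qscale r f x y p) | x y. True} = (\<lambda>t. \<bar>r\<bar> * t) ` {norm (f x y p) | x y. True}"
    by (auto simp: qscale_def norm_mult)
  moreover have "\<bar>r\<bar> * Sup {norm (f x y p) | x y. True} = Sup ((\<lambda>t. \<bar>r\<bar> * t) ` {norm (f x y p) | x y. True})"
    using bdd_above_slice[OF assms]
    by (intro continuous_at_Sup_mono) (auto simp: mono_def mult_left_mono intro!: continuous_intros)
  ultimately show ?thesis
    unfolding slice_sup_def by simp
qed

lemma norm_ii1_qscale:
  assumes "decaying f"
  shows "norm_ii1 (qscale r f) = \<bar>r\<bar> * norm_ii1 f"
  unfolding norm_ii1_eq_infsum_slice_sup slice_sup_qscale[OF assms]
  by (intro infsum_cmult_right slice_sup_summable assms)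

lemma eq_0_if_norm_ii1_eq_0:
  assumes "decaying g" and "norm_ii1 g = 0"
  shows "g x y p = 0"
proof -
  have "slice_sup g p = 0"
    using assms by (intro nonneg_infsum_le_0D[of "slice_sup g" UNIV])
      (auto simp: norm_ii1_eq_infsum_slice_sup intro: slice_sup_summable slice_sup_nonneg)
  then show ?thesis using norm_le_slice_sup[OF assms(1), of x y p] by simp
qed

lemma norm_ii1_le_head_tail:
  fixes N :: nat
  assumes g: "decaying g"
    and head: "\<And>x y p. \<bar>p\<bar> \<le> int N \<Longrightarrow> norm (g x y p) \<le> e"
    and tail: "\<And>x y p. int N < \<bar>p\<bar> \<Longrightarrow> norm (g x y p) \<le> t p"
    and t: "t summable_on UNIV" "\<And>p. 0 \<le> t p"
  shows "norm_ii1 g \<le> (2 * real N + 1) * e + infsum t UNIV"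
proof -
  define W where "W = {- int N..int N}"
  have "((\<lambda>p. if p \<in> W then e else 0) has_sum (2 * real N + 1) * e) UNIV"
    by (rule has_sum_finite_neutralI[of W]) (auto simp: W_def)
  then have sum: "((\<lambda>p. (if p \<in> W then e else 0) + t p) has_sum (2 * real N + 1) * e + infsum t UNIV) UNIV"
    using t(1) by (intro has_sum_add has_sum_infsum)
  have "slice_sup g p \<le> (if p \<in> W then e else 0) + t p" for p
  proof (cases "p \<in> W")
    case True
    then have "\<bar>p\<bar> \<le> int N" by (auto simp: W_def)
    then show ?thesis using head t(2)[of p] True by (intro slice_sup_le) (simp add: add_increasing2)
  next
    case False
    then show ?thesis using tail by (intro slice_sup_le) (auto simp: W_def)
  qed
  then show ?thesis
    unfolding norm_ii1_eq_infsum_slice_sup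
    using has_sum_infsum[OF slice_sup_summable[OF g]] sum by (rule has_sum_mono[rotated 2])
qed


section \<open>Elements of the smooth algebra and their derivations decay\<close>

definition norm_periodic :: "qhf \<Rightarrow> bool" where
  "norm_periodic g \<longleftrightarrow> (\<forall>k x y p. norm (g (x + of_int k) y p) = norm (g x y p)) \<and>
                       (\<forall>l x y p. norm (g x (y + of_int l) p) = norm (g x y p))"

lemma norm_periodic_reduce:
  assumes "norm_periodic g"
  obtains x' y' where "x' \<in> {0..1}" "y' \<in> {0..1}" "norm (g x y p) = norm (g x' y' p)"
proof
  show "x - of_int \<lfloor>x\<rfloor> \<in> {0..1}" "y - of_int \<lfloor>y\<rfloor> \<in> {0..1}"
    by (auto simp: less_imp_le) linarith+
  have "norm (g x y p) = norm (g (x - of_int \<lfloor>x\<rfloor> + of_int \<lfloor>x\<rfloor>) (y - of_int \<lfloor>y\<rfloor> + of_int \<lfloor>y\<rfloor>) p)"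
    by simp
  also have "\<dots> = norm (g (x - of_int \<lfloor>x\<rfloor>) (y - of_int \<lfloor>y\<rfloor>) p)"
    using assms unfolding norm_periodic_def by metis
  finally show "norm (g x y p) = norm (g (x - of_int \<lfloor>x\<rfloor>) (y - of_int \<lfloor>y\<rfloor>) p)" .
qed

lemma decaying_if_norm_periodic:
  assumes "norm_periodic g"
    and "\<And>x y p. x \<in> {0..1} \<Longrightarrow> y \<in> {0..1} \<Longrightarrow> norm (g x y p) \<le> B / (1 + (real_of_int p)\<^sup>2)"
  shows "decaying g"
  unfolding decaying_def by (metis assms norm_periodic_reduce)

lemma delta2_quasi_periodic_x:
  assumes "\<Phi> \<in> Sc c"
  shows "delta2 c \<Phi> (x + of_int k) y p = ee (real c * of_int k * of_int p * y) * delta2 c \<Phi> x y p"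
  using Sc_quasi_periodic_x[OF assms] pdy_quasi_periodic_x[OF assms]
  by (simp add: delta2_def algebra_simps)

lemma Sc_norm_periodic:
  assumes "\<Phi> \<in> Sc c"
  shows "norm_periodic \<Phi>" "norm_periodic (delta1 \<Phi>)" "norm_periodic (delta2 c \<Phi>)"
    "norm_periodic (delta3 \<Phi>)"
  unfolding norm_periodic_def delta1_def delta3_def
  using Sc_quasi_periodic_x[OF assms] Sc_periodic_y_int[OF assms] pdx_quasi_periodic_x[OF assms]
    pdx_periodic_y[OF assms] delta2_quasi_periodic_x[OF assms]
  by (simp_all add: norm_mult delta2_def Sc_periodic_y_int[OF assms] pdy_periodic_y[OF assms])

lemma Sc_weighted_decay:
  assumes "\<Phi> \<in> Sc c" and P: "\<And>p. poly P (real_of_int p) = q p * (1 + (real_of_int p)\<^sup>2)"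
  obtains B where "\<And>x y p. x \<in> {0..1} \<Longrightarrow> y \<in> {0..1} \<Longrightarrow>
    \<bar>q p\<bar> * norm ((pdx ^^ m) ((pdy ^^ n) \<Phi>) x y p) \<le> B / (1 + (real_of_int p)\<^sup>2)"
proof -
  obtain B where B: "\<forall>x y p. (x, y) \<in> {0..1::real} \<times> {0..1::real} \<longrightarrow>
       norm (of_real (poly P (of_int p)) * (pdx ^^ m) ((pdy ^^ n) \<Phi>) x y p) \<le> B"
    using Sc_bounded_on_compact[OF assms(1) compact_Times[OF compact_Icc compact_Icc]] by blast
  have "\<bar>q p\<bar> * norm ((pdx ^^ m) ((pdy ^^ n) \<Phi>) x y p) \<le> B / (1 + (real_of_int p)\<^sup>2)"
    if "x \<in> {0..1}" "y \<in> {0..1}" for x y p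
  proof -
    have w: "0 < 1 + (real_of_int p)\<^sup>2" by (simp add: add_pos_nonneg)
    have "norm (of_real (poly P (of_int p)) * (pdx ^^ m) ((pdy ^^ n) \<Phi>) x y p)
        = \<bar>q p\<bar> * (1 + (real_of_int p)\<^sup>2) * norm ((pdx ^^ m) ((pdy ^^ n) \<Phi>) x y p)"
      by (simp only: norm_mult norm_of_real P abs_mult abs_of_pos[OF w])
    then have "\<bar>q p\<bar> * norm ((pdx ^^ m) ((pdy ^^ n) \<Phi>) x y p) * (1 + (real_of_int p)\<^sup>2)
        = norm (of_real (poly P (of_int p)) * (pdx ^^ m) ((pdy ^^ n) \<Phi>) x y p)"
      by (simp only: ac_simps)
    also have "\<dots> \<le> B" using B that by simp
    finally show ?thesis using w by (simp add: pos_le_divide_eq)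
  qed
  then show ?thesis using that by blast
qed

lemma poly_one_plus_square: "poly [:1, 0, 1:] (real_of_int p) = 1 * (1 + (real_of_int p)\<^sup>2)"
  by (simp add: power2_eq_square)

lemma poly_p_one_plus_square:
  "poly [:0, 1, 0, 1:] (real_of_int p) = real_of_int p * (1 + (real_of_int p)\<^sup>2)"
  by (simp add: power2_eq_square algebra_simps)

lemma Sc_decaying_self: "\<Phi> \<in> Sc c \<Longrightarrow> decaying \<Phi>"
  using Sc_weighted_decay[OF _ poly_one_plus_square, where m=0 and n=0]
  by (metis Sc_norm_periodic(1) decaying_if_norm_periodic abs_one funpow_0 mult_1)

lemma Sc_decaying_delta1:
  assumes "\<Phi> \<in> Sc c"
  shows "decaying (delta1 \<Phi>)"
proof -
  obtain B where "\<And>x y p. x \<in> {0..1} \<Longrightarrow> y \<in> {0..1} \<Longrightarrow>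
      norm (pdx \<Phi> x y p) \<le> B / (1 + (real_of_int p)\<^sup>2)"
    using Sc_weighted_decay[OF assms poly_one_plus_square, where m=1 and n=0] by auto
  then show ?thesis
    by (intro decaying_if_norm_periodic[OF Sc_norm_periodic(2)[OF assms]]) (simp add: delta1_def)
qed

lemma Sc_decaying_delta3:
  assumes "\<Phi> \<in> Sc c"
  shows "decaying (delta3 \<Phi>)"
proof -
  obtain B where B: "\<And>x y p. x \<in> {0..1} \<Longrightarrow> y \<in> {0..1} \<Longrightarrow>
      \<bar>real_of_int p\<bar> * norm (\<Phi> x y p) \<le> B / (1 + (real_of_int p)\<^sup>2)"
    using Sc_weighted_decay[OF assms poly_p_one_plus_square, where m=0 and n=0] by auto
  show ?thesis
  proof (rule decaying_if_norm_periodic[OF Sc_norm_periodic(4)[OF assms], where B="2 * pi * B"])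
    fix x y :: real and p assume "x \<in> {0..1}" "y \<in> {0..1}"
    then have "2 * pi * (\<bar>real_of_int p\<bar> * norm (\<Phi> x y p)) \<le> 2 * pi * (B / (1 + (real_of_int p)\<^sup>2))"
      using B by (intro mult_left_mono) auto
    then show "norm (delta3 \<Phi> x y p) \<le> 2 * pi * B / (1 + (real_of_int p)\<^sup>2)"
      by (simp add: delta3_def norm_mult)
  qed
qed

lemma Sc_decaying_delta2:
  assumes "\<Phi> \<in> Sc c"
  shows "decaying (delta2 c \<Phi>)"
proof -
  obtain B1 where B1: "\<And>x y p. x \<in> {0..1} \<Longrightarrow> y \<in> {0..1} \<Longrightarrow>
      \<bar>real_of_int p\<bar> * norm (\<Phi> x y p) \<le> B1 / (1 + (real_of_int p)\<^sup>2)"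
    using Sc_weighted_decay[OF assms poly_p_one_plus_square, where m=0 and n=0] by auto
  obtain B2 where B2: "\<And>x y p. x \<in> {0..1} \<Longrightarrow> y \<in> {0..1} \<Longrightarrow>
      norm (pdy \<Phi> x y p) \<le> B2 / (1 + (real_of_int p)\<^sup>2)"
    using Sc_weighted_decay[OF assms poly_one_plus_square, where m=0 and n=1] by auto
  show ?thesis
  proof (rule decaying_if_norm_periodic[OF Sc_norm_periodic(3)[OF assms]])
    fix x y :: real and p assume xy: "x \<in> {0..1}" "y \<in> {0..1}"
    have "norm (delta2 c \<Phi> x y p) \<le>
        2 * pi * real c * \<bar>x\<bar> * (\<bar>real_of_int p\<bar> * norm (\<Phi> x y p)) + norm (pdy \<Phi> x y p)"
      unfolding delta2_def by (rule order_trans[OF norm_triangle_ineq4]) (simp add: norm_mult)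
    also have "\<dots> \<le> 2 * pi * real c * 1 * (B1 / (1 + (real_of_int p)\<^sup>2)) + B2 / (1 + (real_of_int p)\<^sup>2)"
      using xy B1[OF xy] B2[OF xy] by (intro add_mono mult_mono) auto
    finally show "norm (delta2 c \<Phi> x y p) \<le> (2 * pi * real c * B1 + B2) / (1 + (real_of_int p)\<^sup>2)"
      by (simp add: add_divide_distrib)
  qed
qed

lemmas Sc_decaying = Sc_decaying_self Sc_decaying_delta1 Sc_decaying_delta2 Sc_decaying_delta3


section \<open>The seminorm \<open>Lip\<close>\<close>

lemma norm_ii1_delta_le_Lip:
  "norm_ii1 (delta1 a) \<le> Lip c a" "norm_ii1 (delta2 c a) \<le> Lip c a" "norm_ii1 (delta3 a) \<le> Lip c a"
  unfolding Lip_def by auto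

lemma Lip_nonneg: "a \<in> Sc c \<Longrightarrow> 0 \<le> Lip c a"
  using norm_ii1_nonneg[OF Sc_decaying(2)] norm_ii1_delta_le_Lip(1) order_trans by blast

lemma norm_delta_le_Lip:
  assumes "a \<in> Sc c"
  shows "norm (delta1 a x y p) \<le> Lip c a" "norm (delta2 c a x y p) \<le> Lip c a"
    "norm (delta3 a x y p) \<le> Lip c a"
  using norm_le_norm_ii1[OF Sc_decaying(2)[OF assms]] norm_le_norm_ii1[OF Sc_decaying(3)[OF assms]]
    norm_le_norm_ii1[OF Sc_decaying(4)[OF assms]] norm_ii1_delta_le_Lip order_trans by blast+

lemma Lip_qadd_le:
  assumes a: "a \<in> Sc c" and b: "b \<in> Sc c"
  shows "Lip c (qadd a b) \<le> Lip c a + Lip c b"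
  using norm_ii1_qadd_le[OF Sc_decaying(2)[OF a] Sc_decaying(2)[OF b]]
    norm_ii1_qadd_le[OF Sc_decaying(3)[OF a] Sc_decaying(3)[OF b]]
    norm_ii1_qadd_le[OF Sc_decaying(4)[OF a] Sc_decaying(4)[OF b]]
    norm_ii1_delta_le_Lip[where a=a and c=c] norm_ii1_delta_le_Lip[where a=b and c=c]
  unfolding Lip_def[of c "qadd a b"] delta_qadd[OF a b] by simp

lemma Lip_qscale:
  assumes "a \<in> Sc c"
  shows "Lip c (qscale r a) = \<bar>r\<bar> * Lip c a"
  unfolding Lip_def delta_qscale[OF assms] norm_ii1_qscale[OF Sc_decaying(2)[OF assms]]
    norm_ii1_qscale[OF Sc_decaying(3)[OF assms]] norm_ii1_qscale[OF Sc_decaying(4)[OF assms]]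
  by (simp add: max_mult_distrib_left)

lemma Lip_qscale_qI: "Lip c (qscale r qI) = 0"
  unfolding Lip_qscale[OF qI_in_Sc] by (simp add: Lip_def delta_qI norm_ii1_def)

lemma derivations_eq_0_if_Lip_eq_0:
  assumes a: "a \<in> Sc c" and "Lip c a = 0"
  shows "delta1 a x y p = 0" "delta2 c a x y p = 0" "delta3 a x y p = 0"
proof -
  have "norm_ii1 (delta1 a) = 0" "norm_ii1 (delta2 c a) = 0" "norm_ii1 (delta3 a) = 0"
    using \<open>Lip c a = 0\<close> norm_ii1_delta_le_Lip[where a=a and c=c]
      norm_ii1_nonneg[OF Sc_decaying(2)[OF a]] norm_ii1_nonneg[OF Sc_decaying(3)[OF a]]
      norm_ii1_nonneg[OF Sc_decaying(4)[OF a]]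
    by linarith+
  then show "delta1 a x y p = 0" "delta2 c a x y p = 0" "delta3 a x y p = 0"
    using eq_0_if_norm_ii1_eq_0 Sc_decaying(2-4)[OF a] by blast+
qed

lemma Lip_eq_0_iff:
  assumes a: "a \<in> Asa c"
  shows "Lip c a = 0 \<longleftrightarrow> (\<exists>r. a = qscale r qI)"
proof
  assume "Lip c a = 0"
  have aS: "a \<in> Sc c" using a by (rule Asa_Sc)
  note d = derivations_eq_0_if_Lip_eq_0[OF aS \<open>Lip c a = 0\<close>]
  have pdx0: "pdx a x y p = 0" for x y p
    using d(1)[of x y p] by (simp add: delta1_def)
  have pdy0: "pdy a x y 0 = 0" for x y
    using d(2)[of x y 0] by (simp add: delta2_def)
  have off0: "a x y p = 0" if "p \<noteq> 0" for x y p
    using d(3)[of x y p] that by (simp add: delta3_def)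
  have const_x: "a x y 0 = a 0 y 0" for x y
    using Sc_has_pdx[OF aS, of y 0] by (intro constant_if_vector_derivative_0) (simp add: pdx0)
  have const_y: "a 0 y 0 = a 0 0 0" for y
    using Sc_has_pdy[OF aS, where x=0 and p=0] by (intro constant_if_vector_derivative_0) (simp add: pdy0)
  define r where "r = Re (a 0 0 0)"
  have "a x y 0 = of_real r" for x y
    unfolding r_def using trans[OF const_x const_y] Asa_real_at_0[OF a, of 0 0] by (rule trans)
  then have "a = qscale r qI"
    using off0 by (auto simp: fun_eq_iff qscale_def qI_def)
  then show "\<exists>r. a = qscale r qI" ..
qed (auto simp: Lip_qscale_qI)

lemma Sc_lipschitz_on_unit_square:
  assumes b: "b \<in> Sc c" and xs: "x \<in> {0..1}" "x' \<in> {0..1}" and ys: "y \<in> {0..1}" "y' \<in> {0..1}"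
  shows "norm (b x y p - b x' y' p) \<le> Lip c b * \<bar>x - x'\<bar> + (real c + 1) * Lip c b * \<bar>y - y'\<bar>"
proof -
  have "norm (b x y p - b x' y p) \<le> Lip c b * \<bar>x - x'\<bar>"
    using xs Sc_has_pdx[OF b] norm_delta_le_Lip(1)[OF b]
    by (intro norm_diff_le_by_derivative_bound[where a=0 and b=1]) (auto simp: delta1_def)
  moreover have "norm (b x' y p - b x' y' p) \<le> (real c + 1) * Lip c b * \<bar>y - y'\<bar>"
  proof (rule norm_diff_le_by_derivative_bound[where a=0 and b=1, OF Sc_has_pdy[OF b] _ ys])
    fix t
    have "pdy b x' t p = of_nat c * of_real x' * delta3 b x' t p - delta2 c b x' t p"
      by (simp add: delta2_def delta3_def algebra_simps)
    then have "norm (pdy b x' t p) \<le> real c * \<bar>x'\<bar> * norm (delta3 b x' t p) + norm (delta2 c b x' t p)"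
      by (metis norm_mult norm_of_nat norm_of_real norm_triangle_ineq4)
    also have "\<dots> \<le> real c * 1 * Lip c b + Lip c b"
      using xs norm_delta_le_Lip[OF b] by (intro add_mono mult_mono) auto
    finally show "norm (pdy b x' t p) \<le> (real c + 1) * Lip c b"
      by (simp add: algebra_simps)
  qed
  ultimately show ?thesis
    using norm_triangle_le[of "b x y p - b x' y p" "b x' y p - b x' y' p"] by simp
qed


section \<open>The C*-norm is dominated by \<open>norm_ii1\<close>\<close>

lemma sigma_finite_hmeas: "sigma_finite_measure hmeas"
proof -
  interpret I: sigma_finite_measure "restrict_space lborel {0..1::real}"
    by (rule sigma_finite_measure_restrict_space) (auto simp: lborel.sigma_finite_measure_axioms)
  interpret RI: pair_sigma_finite lborel "restrict_space lborel {0..1::real}" ..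
  interpret RI': sigma_finite_measure "lborel \<Otimes>\<^sub>M restrict_space lborel {0..1::real}"
    by (rule RI.sigma_finite_measure_axioms)
  interpret Z: sigma_finite_measure "count_space (UNIV :: int set)"
    by (rule sigma_finite_measure_count_space_countable) simp
  interpret H: pair_sigma_finite "lborel \<Otimes>\<^sub>M restrict_space lborel {0..1::real}"
    "count_space (UNIV :: int set)" ..
  show ?thesis unfolding hmeas_def by (rule H.sigma_finite_measure_axioms)
qed

lemma nn_integral_count_space_eq_infsum:
  fixes f :: "'a \<Rightarrow> real"
  assumes "f summable_on UNIV" "\<And>q. 0 \<le> f q"
  shows "(\<integral>\<^sup>+q. ennreal (f q) \<partial>count_space UNIV) = ennreal (infsum f UNIV)"
proof -
  have abs: "Infinite_Set_Sum.abs_summable_on f UNIV"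
    using assms abs_summable_equivalent[of f UNIV] by simp
  then have "integral\<^sup>L (count_space UNIV) f = infsum f UNIV"
    using infsetsum_infsum[OF abs] by (simp add: infsetsum_def)
  moreover have "(\<integral>\<^sup>+q. ennreal (f q) \<partial>count_space UNIV) = ennreal (integral\<^sup>L (count_space UNIV) f)"
    using abs assms(2) by (intro nn_integral_eq_integral) (auto simp: abs_summable_on_def)
  ultimately show ?thesis by simp
qed

lemma nn_integral_weighted_Cauchy_Schwarz:
  fixes s u :: "'a \<Rightarrow> real"
  assumes "\<And>q. 0 \<le> s q" "\<And>q. 0 \<le> u q"
    and [measurable]: "s \<in> borel_measurable M" "u \<in> borel_measurable M"
  shows "(\<integral>\<^sup>+q. ennreal (s q * u q) \<partial>M)\<^sup>2 \<le>
           (\<integral>\<^sup>+q. ennreal (s q) \<partial>M) * (\<integral>\<^sup>+q. ennreal (s q * (u q)\<^sup>2) \<partial>M)"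
proof -
  have "ennreal (sqrt (s q)) * ennreal (sqrt (s q) * u q) = ennreal (s q * u q)"
    "ennreal (sqrt (s q)) ^ 2 = ennreal (s q)"
    "ennreal (sqrt (s q) * u q) ^ 2 = ennreal (s q * (u q)\<^sup>2)" for q
    using assms(1,2)[of q] by (simp_all add: ennreal_mult[symmetric] ennreal_power power_mult_distrib
        mult.assoc[symmetric])
  then show ?thesis
    using Cauchy_Schwarz_nn_integral[of "\<lambda>q. ennreal (sqrt (s q))" M "\<lambda>q. ennreal (sqrt (s q) * u q)"]
    by simp measurable
qed

lemma measurable_shift_hmeas:
  "(\<lambda>w. (fst (fst w), snd (fst w) - snd w)) \<in> measurable (hmeas \<Otimes>\<^sub>M count_space UNIV) hmeas"
  "(\<lambda>z. (fst z, snd z - q)) \<in> measurable hmeas hmeas"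
  unfolding hmeas_def by (simp_all add: pair_measure_countable)

lemma nn_integral_hmeas_shift:
  assumes g: "g \<in> borel_measurable hmeas"
  shows "(\<integral>\<^sup>+z. g (fst z, snd z - q) \<partial>hmeas) = (\<integral>\<^sup>+z. g z \<partial>hmeas)"
proof -
  interpret Z: sigma_finite_measure "count_space (UNIV :: int set)"
    by (rule sigma_finite_measure_count_space_countable) simp
  have "bij_betw (\<lambda>p::int. p - q) UNIV UNIV"
    by (rule bij_betwI[where g="\<lambda>p. p + q"]) auto
  then have "(\<integral>\<^sup>+p. g (m, p - q) \<partial>count_space UNIV) = (\<integral>\<^sup>+p. g (m, p) \<partial>count_space UNIV)" for m
    by (rule nn_integral_bij_count_space)
  moreover have "(\<lambda>z. g (fst z, snd z - q)) \<in> borel_measurable hmeas"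
    by (rule measurable_compose[OF measurable_shift_hmeas(2) g])
  ultimately show ?thesis
    using Z.nn_integral_fst[of "\<lambda>z. g (fst z, snd z - q)"] Z.nn_integral_fst[of g] g
    unfolding hmeas_def by simp
qed

lemma norm_piop_le:
  assumes "decaying \<Phi>"
  shows "ennreal (norm (piop h mu nu \<Phi> \<xi> z)) \<le>
           (\<integral>\<^sup>+q. ennreal (slice_sup \<Phi> q * norm (\<xi> (fst z, snd z - q))) \<partial>count_space UNIV)"
proof -
  obtain x y p where z: "z = ((x, y), p)" by (metis prod.collapse)
  define f where "f q = \<Phi> (x - h * of_int (q - 2 * p) * mu) (y - h * of_int (q - 2 * p) * nu) q *
                          \<xi> ((x, y), p - q)" for q
  have piop: "piop h mu nu \<Phi> \<xi> z = infsum f UNIV"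
    unfolding z piop_def f_def by simp
  have f_le: "norm (f q) \<le> slice_sup \<Phi> q * norm (\<xi> (fst z, snd z - q))" for q
    unfolding f_def z using norm_le_slice_sup[OF assms] by (auto simp: norm_mult intro: mult_right_mono)
  show ?thesis
  proof (cases "f summable_on UNIV")
    case True
    then have norm_f: "(\<lambda>q. norm (f q)) summable_on UNIV"
      using summable_on_iff_abs_summable_on_complex by blast
    have "norm (infsum f UNIV) \<le> infsum (\<lambda>q. norm (f q)) UNIV"
      by (rule norm_infsum_le[OF has_sum_infsum[OF True] has_sum_infsum[OF norm_f]]) simp
    then have "ennreal (norm (infsum f UNIV)) \<le> (\<integral>\<^sup>+q. ennreal (norm (f q)) \<partial>count_space UNIV)"
      by (simp add: nn_integral_count_space_eq_infsum[OF norm_f] ennreal_leI)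
    also have "\<dots> \<le> (\<integral>\<^sup>+q. ennreal (slice_sup \<Phi> q * norm (\<xi> (fst z, snd z - q))) \<partial>count_space UNIV)"
      by (intro nn_integral_mono ennreal_leI f_le)
    finally show ?thesis unfolding piop .
  next
    case False
    \<comment> \<open>a divergent series has sum \<open>0\<close> by the convention of \<open>infsum\<close>\<close>
    then show ?thesis unfolding piop infsum_not_exists[OF False] by simp
  qed
qed

lemma nn_integral_slice_sup: "decaying \<Phi> \<Longrightarrow>
    (\<integral>\<^sup>+q. ennreal (slice_sup \<Phi> q) \<partial>count_space UNIV) = ennreal (norm_ii1 \<Phi>)"
  unfolding norm_ii1_eq_infsum_slice_sup
  by (intro nn_integral_count_space_eq_infsum slice_sup_summable slice_sup_nonneg)

lemma norm_piop_squared_le: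
  assumes "decaying \<Phi>"
  shows "ennreal ((norm (piop h mu nu \<Phi> \<xi> z))\<^sup>2) \<le> ennreal (norm_ii1 \<Phi>) *
      (\<integral>\<^sup>+q. ennreal (slice_sup \<Phi> q * (norm (\<xi> (fst z, snd z - q)))\<^sup>2) \<partial>count_space UNIV)"
proof -
  have "ennreal ((norm (piop h mu nu \<Phi> \<xi> z))\<^sup>2) = (ennreal (norm (piop h mu nu \<Phi> \<xi> z)))\<^sup>2"
    by (simp add: ennreal_power)
  also have "\<dots> \<le> (\<integral>\<^sup>+q. ennreal (slice_sup \<Phi> q * norm (\<xi> (fst z, snd z - q))) \<partial>count_space UNIV)\<^sup>2"
    using norm_piop_le[OF assms] by (intro power_mono) auto
  also have "\<dots> \<le> (\<integral>\<^sup>+q. ennreal (slice_sup \<Phi> q) \<partial>count_space UNIV) *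
      (\<integral>\<^sup>+q. ennreal (slice_sup \<Phi> q * (norm (\<xi> (fst z, snd z - q)))\<^sup>2) \<partial>count_space UNIV)"
    by (rule nn_integral_weighted_Cauchy_Schwarz) (simp_all add: slice_sup_nonneg[OF assms])
  finally show ?thesis unfolding nn_integral_slice_sup[OF assms] .
qed

lemma l2sq_shift:
  assumes [measurable]: "\<xi> \<in> borel_measurable hmeas"
  shows "(\<integral>\<^sup>+z. ennreal ((norm (\<xi> (fst z, snd z - q)))\<^sup>2) \<partial>hmeas) = l2sq \<xi>"
  unfolding l2sq_def by (rule nn_integral_hmeas_shift) measurable

lemma l2sq_piop_le:
  assumes \<Phi>: "decaying \<Phi>" and [measurable]: "\<xi> \<in> borel_measurable hmeas"
  shows "l2sq (piop h mu nu \<Phi> \<xi>) \<le> ennreal ((norm_ii1 \<Phi>)\<^sup>2) * l2sq \<xi>"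
proof -
  interpret Z: sigma_finite_measure "count_space (UNIV :: int set)"
    by (rule sigma_finite_measure_count_space_countable) simp
  interpret HZ: pair_sigma_finite hmeas "count_space (UNIV :: int set)"
    by (intro pair_sigma_finite.intro sigma_finite_hmeas Z.sigma_finite_measure_axioms)
  define S where "S = norm_ii1 \<Phi>"
  have S: "0 \<le> S" unfolding S_def by (rule norm_ii1_nonneg[OF \<Phi>])
  have [measurable]: "(\<lambda>w. \<xi> (fst (fst w), snd (fst w) - snd w)) \<in> borel_measurable (hmeas \<Otimes>\<^sub>M count_space UNIV)"
    by (rule measurable_compose[OF measurable_shift_hmeas(1)]) measurable
  have [measurable]: "(\<lambda>z. \<xi> (fst z, snd z - q)) \<in> borel_measurable hmeas" for q
    by (rule measurable_compose[OF measurable_shift_hmeas(2)]) measurable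
  have "l2sq (piop h mu nu \<Phi> \<xi>) \<le> (\<integral>\<^sup>+z. \<integral>\<^sup>+q. ennreal S *
      (ennreal (slice_sup \<Phi> q) * ennreal ((norm (\<xi> (fst z, snd z - q)))\<^sup>2)) \<partial>count_space UNIV \<partial>hmeas)"
    unfolding l2sq_def S_def using norm_piop_squared_le[OF \<Phi>]
    by (intro nn_integral_mono) (simp add: nn_integral_cmult ennreal_mult slice_sup_nonneg[OF \<Phi>])
  also have "\<dots> = (\<integral>\<^sup>+q. \<integral>\<^sup>+z. ennreal S *
      (ennreal (slice_sup \<Phi> q) * ennreal ((norm (\<xi> (fst z, snd z - q)))\<^sup>2)) \<partial>hmeas \<partial>count_space UNIV)"
    by (rule HZ.Fubini'[symmetric]) measurable
  also have "\<dots> = (\<integral>\<^sup>+q. ennreal S * (ennreal (slice_sup \<Phi> q) * l2sq \<xi>) \<partial>count_space UNIV)"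
    by (intro nn_integral_cong) (simp add: nn_integral_cmult l2sq_shift)
  also have "\<dots> = ennreal (S\<^sup>2) * l2sq \<xi>"
    using S by (simp add: nn_integral_cmult nn_integral_multc nn_integral_slice_sup[OF \<Phi>] S_def
        ennreal_mult power2_eq_square mult.assoc)
  finally show ?thesis unfolding S_def .
qed

lemma l2norm_piop_le:
  assumes \<Phi>: "decaying \<Phi>" and \<xi>: "inL2 \<xi>"
  shows "l2norm (piop h mu nu \<Phi> \<xi>) \<le> norm_ii1 \<Phi> * l2norm \<xi>"
proof -
  have "enn2real (l2sq (piop h mu nu \<Phi> \<xi>)) \<le> enn2real (ennreal ((norm_ii1 \<Phi>)\<^sup>2) * l2sq \<xi>)"
    using \<xi> l2sq_piop_le[OF \<Phi>] by (intro enn2real_mono) (simp_all add: inL2_def ennreal_mult_less_top)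
  then have "l2norm (piop h mu nu \<Phi> \<xi>) \<le> sqrt ((norm_ii1 \<Phi>)\<^sup>2 * enn2real (l2sq \<xi>))"
    unfolding l2norm_def by (simp add: enn2real_mult)
  then show ?thesis
    using norm_ii1_nonneg[OF \<Phi>] by (simp add: l2norm_def real_sqrt_mult)
qed

lemma cnorm_bounds:
  assumes "decaying \<Phi>"
  shows cnorm_nonneg: "0 \<le> cnorm h mu nu \<Phi>"
    and cnorm_le_norm_ii1: "cnorm h mu nu \<Phi> \<le> norm_ii1 \<Phi>"
proof -
  define X where "X = {l2norm (piop h mu nu \<Phi> \<xi>) | \<xi>. inL2 \<xi> \<and> l2norm \<xi> \<le> 1}"
  have zero: "l2norm (piop h mu nu \<Phi> (\<lambda>_. 0)) \<in> X"
    unfolding X_def by (force simp: inL2_def l2sq_def l2norm_def)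
  have le: "v \<le> norm_ii1 \<Phi>" if "v \<in> X" for v
  proof -
    obtain \<xi> where v: "v = l2norm (piop h mu nu \<Phi> \<xi>)" and \<xi>: "inL2 \<xi>" "l2norm \<xi> \<le> 1"
      using \<open>v \<in> X\<close> unfolding X_def by blast
    have "v \<le> norm_ii1 \<Phi> * l2norm \<xi>"
      unfolding v by (rule l2norm_piop_le[OF assms \<xi>(1)])
    also have "\<dots> \<le> norm_ii1 \<Phi>"
      using \<xi>(2) norm_ii1_nonneg[OF assms] by (simp add: mult_left_le)
    finally show ?thesis .
  qed
  show "cnorm h mu nu \<Phi> \<le> norm_ii1 \<Phi>"
    unfolding cnorm_def X_def[symmetric] using zero le by (intro cSup_least) auto
  have "0 \<le> l2norm (piop h mu nu \<Phi> (\<lambda>_. 0))"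
    by (simp add: l2norm_def)
  also have "\<dots> \<le> Sup X"
    using zero le by (intro cSup_upper) (auto simp: bdd_above_def)
  finally show "0 \<le> cnorm h mu nu \<Phi>"
    unfolding cnorm_def X_def .
qed

lemma stateD:
  assumes "\<omega> \<in> states c h mu nu"
  shows state_extensional: "\<omega> \<in> extensional (Asa c)"
    and state_qadd: "a \<in> Asa c \<Longrightarrow> b \<in> Asa c \<Longrightarrow> \<omega> (qadd a b) = \<omega> a + \<omega> b"
    and state_qscale: "a \<in> Asa c \<Longrightarrow> \<omega> (qscale r a) = r * \<omega> a"
    and state_bounded: "\<exists>C. \<forall>a\<in>Asa c. \<bar>\<omega> a\<bar> \<le> C * cnorm h mu nu a"
    and state_qI: "\<omega> qI = 1"
    and state_fnorm: "fnorm c h mu nu \<omega> = 1"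
  using assms unfolding states_def by blast+

lemma state_qscale_qI: "\<omega> \<in> states c h mu nu \<Longrightarrow> \<omega> (qscale r qI) = r"
  by (simp add: state_qscale[OF _ qI_in_Asa] state_qI)

lemma state_diff:
  assumes "\<omega> \<in> states c h mu nu" "a \<in> Asa c" "b \<in> Asa c"
  shows "\<omega> (qadd a (qscale (-1) b)) = \<omega> a - \<omega> b"
  using state_qadd[OF assms(1,2) Asa_qscale[OF assms(3)]] state_qscale[OF assms(1,3)] by simp

lemma state_abs_le_1:
  assumes \<omega>: "\<omega> \<in> states c h mu nu" and b: "b \<in> Asa c" "cnorm h mu nu b \<le> 1"
  shows "\<bar>\<omega> b\<bar> \<le> 1"
proof -
  define Y where "Y = {\<bar>\<omega> a\<bar> | a. a \<in> Asa c \<and> cnorm h mu nu a \<le> 1}"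
  obtain C where C: "\<forall>a\<in>Asa c. \<bar>\<omega> a\<bar> \<le> C * cnorm h mu nu a"
    using state_bounded[OF \<omega>] by blast
  have "v \<le> \<bar>C\<bar>" if "v \<in> Y" for v
  proof -
    obtain a where v: "v = \<bar>\<omega> a\<bar>" and a: "a \<in> Asa c" "cnorm h mu nu a \<le> 1"
      using \<open>v \<in> Y\<close> unfolding Y_def by blast
    have "v \<le> \<bar>C\<bar> * cnorm h mu nu a"
      using C a(1) cnorm_nonneg[OF Sc_decaying(1)[OF Asa_Sc[OF a(1)]], of h mu nu]
      by (metis v abs_ge_self mult_right_mono order_trans)
    also have "\<dots> \<le> \<bar>C\<bar>"
      using a(2) by (simp add: mult_left_le)
    finally show ?thesis .
  qed
  then have "bdd_above Y"
    unfolding bdd_above_def by blast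
  moreover have "Sup Y = 1"
    using state_fnorm[OF \<omega>] unfolding fnorm_def Y_def .
  moreover have "\<bar>\<omega> b\<bar> \<in> Y"
    unfolding Y_def using b by blast
  ultimately show ?thesis
    by (metis cSup_upper)
qed

lemma state_abs_le_norm_ii1:
  assumes \<omega>: "\<omega> \<in> states c h mu nu" and a: "a \<in> Asa c"
  shows "\<bar>\<omega> a\<bar> \<le> norm_ii1 a"
proof -
  have dec: "decaying a" using Sc_decaying(1)[OF Asa_Sc[OF a]] .
  define n where "n = norm_ii1 a"
  show ?thesis
  proof (cases "n = 0")
    case True
    obtain C where "\<forall>a\<in>Asa c. \<bar>\<omega> a\<bar> \<le> C * cnorm h mu nu a"
      using state_bounded[OF \<omega>] by blast
    moreover have "cnorm h mu nu a = 0"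
      using cnorm_bounds[OF dec, of h mu nu] True unfolding n_def by linarith
    ultimately show ?thesis using a True unfolding n_def by fastforce
  next
    case False
    then have n: "0 < n" using norm_ii1_nonneg[OF dec] unfolding n_def by simp
    have "cnorm h mu nu (qscale (1 / n) a) \<le> norm_ii1 (qscale (1 / n) a)"
      by (rule cnorm_le_norm_ii1[OF decaying_qscale[OF dec]])
    also have "\<dots> = 1"
      using n by (simp add: norm_ii1_qscale[OF dec] n_def)
    finally have "\<bar>\<omega> (qscale (1 / n) a)\<bar> \<le> 1"
      by (rule state_abs_le_1[OF \<omega> Asa_qscale[OF a]])
    then show ?thesis
      using n by (simp add: state_qscale[OF \<omega> a] abs_mult n_def)
  qed
qed


section \<open>Boundedness of the Lip-ball modulo scalars\<close>

definition recentre :: "qhf \<Rightarrow> qhf" where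
  "recentre a = qadd a (qscale (- Re (a 0 0 0)) qI)"

lemma recentre_in_Asa: "a \<in> Asa c \<Longrightarrow> recentre a \<in> Asa c"
  unfolding recentre_def by (intro Asa_qadd Asa_qscale qI_in_Asa)

lemma recentre_at_origin: "a \<in> Asa c \<Longrightarrow> recentre a 0 0 0 = 0"
  using Asa_real_at_0[of a c 0 0] by (simp add: recentre_def qadd_def qscale_def qI_def)

lemma Lip_recentre:
  assumes "a \<in> Asa c"
  shows "Lip c (recentre a) = Lip c a"
proof -
  have "delta1 (recentre a) = delta1 a" "delta2 c (recentre a) = delta2 c a"
    "delta3 (recentre a) = delta3 a"
    unfolding recentre_def delta_qadd[OF Asa_Sc[OF assms] Sc_qscale[OF qI_in_Sc]]
      delta_qscale[OF qI_in_Sc] delta_qI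
    by (simp_all add: qadd_def qscale_def)
  then show ?thesis unfolding Lip_def by simp
qed

lemma state_recentre:
  assumes "\<omega> \<in> states c h mu nu" "a \<in> Asa c"
  shows "\<omega> (recentre a) = \<omega> a - Re (a 0 0 0)"
  unfolding recentre_def
  using state_qadd[OF assms Asa_qscale[OF qI_in_Asa]] state_qscale_qI[OF assms(1)] by simp

lemma abs_mult_norm_le_delta3: "\<bar>real_of_int p\<bar> * norm (b x y p) \<le> norm (delta3 b x y p)"
proof -
  have "\<bar>real_of_int p\<bar> * norm (b x y p) \<le> (2 * pi) * (\<bar>real_of_int p\<bar> * norm (b x y p))"
    using mult_right_mono[of 1 "2 * pi" "\<bar>real_of_int p\<bar> * norm (b x y p)"] pi_gt3 by simp
  then show ?thesis
    by (simp add: delta3_def norm_mult mult.assoc)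
qed

lemma norm_le_slice_sup_delta3:
  assumes "b \<in> Sc c" "0 < k" "k \<le> \<bar>real_of_int p\<bar>"
  shows "norm (b x y p) \<le> slice_sup (delta3 b) p / k"
proof -
  have "k * norm (b x y p) \<le> \<bar>real_of_int p\<bar> * norm (b x y p)"
    using assms(3) by (intro mult_right_mono) auto
  also have "\<dots> \<le> slice_sup (delta3 b) p"
    using abs_mult_norm_le_delta3 norm_le_slice_sup[OF Sc_decaying(4)[OF assms(1)]] order_trans by blast
  finally show ?thesis
    using assms(2) by (simp add: field_simps)
qed

lemma norm_le_Lip_if_vanishes_at_origin:
  assumes b: "b \<in> Sc c" and b0: "b 0 0 0 = 0"
  shows "norm (b x y p) \<le> (real c + 2) * Lip c b"
proof -
  have L: "0 \<le> Lip c b" by (rule Lip_nonneg[OF b])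
  obtain x' y' where xy: "x' \<in> {0..1}" "y' \<in> {0..1}" and eq: "norm (b x y p) = norm (b x' y' p)"
    using norm_periodic_reduce[OF Sc_norm_periodic(1)[OF b]] by blast
  show ?thesis
  proof (cases "p = 0")
    case True
    have "norm (b x' y' 0 - b 0 0 0) \<le> Lip c b * \<bar>x' - 0\<bar> + (real c + 1) * Lip c b * \<bar>y' - 0\<bar>"
      using xy by (intro Sc_lipschitz_on_unit_square[OF b]) auto
    also have "\<dots> \<le> Lip c b * 1 + (real c + 1) * Lip c b * 1"
      using xy L by (intro add_mono mult_left_mono) auto
    finally show ?thesis
      using eq b0 True by (simp add: algebra_simps)
  next
    case False
    then have "1 \<le> \<bar>real_of_int p\<bar>"
      by linarith
    then have "norm (b x y p) \<le> \<bar>real_of_int p\<bar> * norm (b x y p)"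
      using mult_right_mono[of 1 "\<bar>real_of_int p\<bar>" "norm (b x y p)"] by simp
    also have "\<dots> \<le> Lip c b"
      using abs_mult_norm_le_delta3 norm_delta_le_Lip(3)[OF b] order_trans by blast
    also have "\<dots> \<le> (real c + 2) * Lip c b"
      using L by (simp add: mult_le_cancel_right1)
    finally show ?thesis .
  qed
qed

lemma norm_ii1_le_Lip_if_vanishes_at_origin:
  assumes b: "b \<in> Sc c" and b0: "b 0 0 0 = 0"
  shows "norm_ii1 b \<le> (real c + 3) * Lip c b"
proof -
  have "norm_ii1 b \<le> (2 * real 0 + 1) * ((real c + 2) * Lip c b) + infsum (slice_sup (delta3 b)) UNIV"
  proof (rule norm_ii1_le_head_tail[OF Sc_decaying(1)[OF b]])
    show "norm (b x y p) \<le> slice_sup (delta3 b) p" if "int 0 < \<bar>p\<bar>" for x y p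
      using norm_le_slice_sup_delta3[OF b, of 1 p x y] that by simp
  qed (use norm_le_Lip_if_vanishes_at_origin[OF b b0] Sc_decaying(4)[OF b] in
        \<open>auto intro: slice_sup_summable slice_sup_nonneg\<close>)
  also have "\<dots> \<le> (real c + 2) * Lip c b + Lip c b"
    using norm_ii1_delta_le_Lip(3)[of b c] by (simp add: norm_ii1_eq_infsum_slice_sup)
  finally show ?thesis by (simp add: algebra_simps)
qed

lemma rhoL_le:
  assumes "\<And>a. a \<in> Asa c \<Longrightarrow> Lip c a \<le> 1 \<Longrightarrow> \<bar>\<omega>1 a - \<omega>2 a\<bar> \<le> K"
  shows "rhoL c \<omega>1 \<omega>2 \<le> ereal K"
  unfolding rhoL_def using assms by (intro SUP_least) auto

lemma rhoL_finite:
  assumes \<omega>1: "\<omega>1 \<in> states c h mu nu" and \<omega>2: "\<omega>2 \<in> states c h mu nu"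
  shows "rhoL c \<omega>1 \<omega>2 < \<infinity>"
proof -
  have "rhoL c \<omega>1 \<omega>2 \<le> ereal (2 * (real c + 3))"
  proof (rule rhoL_le)
    fix a assume a: "a \<in> Asa c" and "Lip c a \<le> 1"
    have b: "recentre a \<in> Asa c" by (rule recentre_in_Asa[OF a])
    have "norm_ii1 (recentre a) \<le> (real c + 3) * Lip c (recentre a)"
      by (rule norm_ii1_le_Lip_if_vanishes_at_origin[OF Asa_Sc[OF b] recentre_at_origin[OF a]])
    also have "\<dots> \<le> real c + 3"
      using \<open>Lip c a \<le> 1\<close> by (simp add: Lip_recentre[OF a] mult_left_le)
    finally have bound: "norm_ii1 (recentre a) \<le> real c + 3" .
    have "\<bar>\<omega>1 a - \<omega>2 a\<bar> = \<bar>\<omega>1 (recentre a) - \<omega>2 (recentre a)\<bar>"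
      using state_recentre[OF \<omega>1 a] state_recentre[OF \<omega>2 a] by simp
    also have "\<dots> \<le> \<bar>\<omega>1 (recentre a)\<bar> + \<bar>\<omega>2 (recentre a)\<bar>"
      by (rule abs_triangle_ineq4)
    also have "\<dots> \<le> norm_ii1 (recentre a) + norm_ii1 (recentre a)"
      by (intro add_mono state_abs_le_norm_ii1[OF \<omega>1 b] state_abs_le_norm_ii1[OF \<omega>2 b])
    finally show "\<bar>\<omega>1 a - \<omega>2 a\<bar> \<le> 2 * (real c + 3)"
      using bound by simp
  qed
  then show ?thesis
    using order.strict_trans1 by fastforce
qed

lemma state_diff_le_Lip_rhoL:
  assumes \<omega>0: "\<omega>0 \<in> states c h mu nu" and \<omega>: "\<omega> \<in> states c h mu nu" and a: "a \<in> Asa c"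
    and \<rho>: "rhoL c \<omega>0 \<omega> < ereal e"
  shows "\<bar>\<omega>0 a - \<omega> a\<bar> \<le> Lip c a * e"
proof (cases "Lip c a = 0")
  case True
  then obtain r where "a = qscale r qI" using Lip_eq_0_iff[OF a] by blast
  then show ?thesis using state_qscale_qI[OF \<omega>0] state_qscale_qI[OF \<omega>] True by simp
next
  case False
  define L where "L = Lip c a"
  have L: "0 < L" using False Lip_nonneg[OF Asa_Sc[OF a]] unfolding L_def by simp
  have "Lip c (qscale (1 / L) a) = 1"
    using L by (simp add: Lip_qscale[OF Asa_Sc[OF a]] L_def)
  then have "ereal \<bar>\<omega>0 (qscale (1 / L) a) - \<omega> (qscale (1 / L) a)\<bar> \<le> rhoL c \<omega>0 \<omega>"
    unfolding rhoL_def using Asa_qscale[OF a] by (intro SUP_upper) auto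
  then have "ereal \<bar>\<omega>0 (qscale (1 / L) a) - \<omega> (qscale (1 / L) a)\<bar> < ereal e"
    using \<rho> by (rule order.strict_trans1)
  then have "\<bar>\<omega>0 (qscale (1 / L) a) - \<omega> (qscale (1 / L) a)\<bar> < e"
    by simp
  then have "\<bar>\<omega>0 a - \<omega> a\<bar> / L < e"
    using L by (simp add: state_qscale[OF \<omega>0 a] state_qscale[OF \<omega> a] abs_mult diff_divide_distrib[symmetric])
  then show ?thesis
    using L unfolding L_def by (simp add: pos_divide_less_eq mult.commute)
qed


section \<open>Topologies induced by extended distances\<close>

lemma istopology_dist:
  "istopology (\<lambda>U. U \<subseteq> S \<and> (\<forall>x\<in>U. \<exists>e>0. \<forall>y\<in>S. d x y < ereal e \<longrightarrow> y \<in> U))"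
  unfolding istopology_def
proof (rule conjI; intro allI impI)
  fix U V assume U: "U \<subseteq> S \<and> (\<forall>x\<in>U. \<exists>e>0. \<forall>y\<in>S. d x y < ereal e \<longrightarrow> y \<in> U)"
    and V: "V \<subseteq> S \<and> (\<forall>x\<in>V. \<exists>e>0. \<forall>y\<in>S. d x y < ereal e \<longrightarrow> y \<in> V)"
  show "U \<inter> V \<subseteq> S \<and> (\<forall>x\<in>U \<inter> V. \<exists>e>0. \<forall>y\<in>S. d x y < ereal e \<longrightarrow> y \<in> U \<inter> V)"
  proof (intro conjI ballI)
    show "U \<inter> V \<subseteq> S" using U by blast
    fix x assume x: "x \<in> U \<inter> V"
    obtain e1 where e1: "e1 > 0" "\<forall>y\<in>S. d x y < ereal e1 \<longrightarrow> y \<in> U" using U x by blast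
    obtain e2 where e2: "e2 > 0" "\<forall>y\<in>S. d x y < ereal e2 \<longrightarrow> y \<in> V" using V x by blast
    show "\<exists>e>0. \<forall>y\<in>S. d x y < ereal e \<longrightarrow> y \<in> U \<inter> V"
    proof (intro exI conjI ballI impI)
      show "0 < min e1 e2" using e1 e2 by simp
      fix y assume y: "y \<in> S" "d x y < ereal (min e1 e2)"
      have "d x y < ereal e1" "d x y < ereal e2" using y(2) by (auto intro: order.strict_trans2)
      then show "y \<in> U \<inter> V" using e1 e2 y(1) by blast
    qed
  qed
next
  fix K assume K: "\<forall>U\<in>K. U \<subseteq> S \<and> (\<forall>x\<in>U. \<exists>e>0. \<forall>y\<in>S. d x y < ereal e \<longrightarrow> y \<in> U)"
  show "\<Union>K \<subseteq> S \<and> (\<forall>x\<in>\<Union>K. \<exists>e>0. \<forall>y\<in>S. d x y < ereal e \<longrightarrow> y \<in> \<Union>K)"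
  proof (intro conjI ballI)
    show "\<Union>K \<subseteq> S" using K by blast
    fix x assume "x \<in> \<Union>K"
    then obtain U where U: "U \<in> K" "x \<in> U" by blast
    then obtain e where "e > 0" "\<forall>y\<in>S. d x y < ereal e \<longrightarrow> y \<in> U" using K by blast
    then show "\<exists>e>0. \<forall>y\<in>S. d x y < ereal e \<longrightarrow> y \<in> \<Union>K" using U by blast
  qed
qed

lemma openin_dist_topology:
  "openin (dist_topology S d) U \<longleftrightarrow> U \<subseteq> S \<and> (\<forall>x\<in>U. \<exists>e>0. \<forall>y\<in>S. d x y < ereal e \<longrightarrow> y \<in> U)"
  unfolding dist_topology_def topology_inverse'[OF istopology_dist] ..

lemma ex_common_radius:
  fixes d :: "'b \<Rightarrow> ereal"
  assumes "finite J" and "\<And>a. a \<in> J \<Longrightarrow> \<exists>e>0. \<forall>\<omega>. d \<omega> < ereal e \<longrightarrow> P a \<omega>"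
  shows "\<exists>e>0. \<forall>\<omega>. d \<omega> < ereal e \<longrightarrow> (\<forall>a\<in>J. P a \<omega>)"
  using assms
proof (induction J rule: finite_induct)
  case empty
  show ?case by (intro exI[of _ 1]) simp
next
  case (insert a J)
  obtain e1 where "e1 > 0" and e1: "\<forall>\<omega>. d \<omega> < ereal e1 \<longrightarrow> P a \<omega>"
    using insert.prems by blast
  obtain e2 where "e2 > 0" and e2: "\<forall>\<omega>. d \<omega> < ereal e2 \<longrightarrow> (\<forall>a\<in>J. P a \<omega>)"
    using insert.IH insert.prems by blast
  have "d \<omega> < ereal e1" "d \<omega> < ereal e2" if "d \<omega> < ereal (min e1 e2)" for \<omega>
    using that by (auto intro: order.strict_trans2)
  then show ?case
    using \<open>e1 > 0\<close> \<open>e2 > 0\<close> e1 e2 by (intro exI[of _ "min e1 e2"]) auto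
qed

lemma openin_pointwise_if_openin_dist:
  fixes S :: "('a \<Rightarrow> real) set" and d :: "('a \<Rightarrow> real) \<Rightarrow> ('a \<Rightarrow> real) \<Rightarrow> ereal"
  assumes S: "S \<subseteq> extensional A"
    and ball: "\<And>e. 0 < e \<Longrightarrow> \<exists>F \<delta>. finite F \<and> F \<subseteq> A \<and> 0 < \<delta> \<and>
      (\<forall>\<omega>0\<in>S. \<forall>\<omega>\<in>S. (\<forall>a\<in>F. \<bar>\<omega>0 a - \<omega> a\<bar> < \<delta>) \<longrightarrow> d \<omega>0 \<omega> < ereal e)"
    and "openin (dist_topology S d) U"
  shows "openin (subtopology (product_topology (\<lambda>_. euclideanreal) A) S) U"
  unfolding openin_subopen[of _ U]
proof
  fix \<omega>0 assume "\<omega>0 \<in> U"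
  have US: "U \<subseteq> S" and "\<forall>x\<in>U. \<exists>e>0. \<forall>y\<in>S. d x y < ereal e \<longrightarrow> y \<in> U"
    using assms(3) unfolding openin_dist_topology by auto
  then obtain e where "e > 0" and e: "\<forall>\<omega>\<in>S. d \<omega>0 \<omega> < ereal e \<longrightarrow> \<omega> \<in> U"
    using \<open>\<omega>0 \<in> U\<close> by blast
  then obtain F \<delta> where F: "finite F" "F \<subseteq> A" "0 < \<delta>"
    and F_ball: "\<forall>\<omega>0\<in>S. \<forall>\<omega>\<in>S. (\<forall>a\<in>F. \<bar>\<omega>0 a - \<omega> a\<bar> < \<delta>) \<longrightarrow> d \<omega>0 \<omega> < ereal e"
    using ball[OF \<open>e > 0\<close>] by blast
  define X where "X a = (if a \<in> F then ball (\<omega>0 a) \<delta> else UNIV)" for a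
  have "openin euclideanreal (X a)" for a
    by (simp add: X_def)
  moreover have "finite {a. X a \<noteq> topspace euclideanreal}"
    by (rule finite_subset[OF _ F(1)]) (auto simp: X_def)
  ultimately have "openin (product_topology (\<lambda>_. euclideanreal) A) (PiE A X)"
    by (rule product_topology_basis)
  then have "openin (subtopology (product_topology (\<lambda>_. euclideanreal) A) S) (PiE A X \<inter> S)"
    unfolding openin_subtopology by blast
  moreover have "\<omega>0 \<in> PiE A X \<inter> S"
    using \<open>\<omega>0 \<in> U\<close> US S F(3) by (auto simp: X_def PiE_def)
  moreover have "PiE A X \<inter> S \<subseteq> U"
  proof
    fix \<omega> assume \<omega>: "\<omega> \<in> PiE A X \<inter> S"
    have "\<bar>\<omega>0 a - \<omega> a\<bar> < \<delta>" if "a \<in> F" for a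
      using \<omega> that F(2) by (force simp: X_def dist_real_def PiE_iff)
    then show "\<omega> \<in> U"
      using F_ball e \<omega> \<open>\<omega>0 \<in> U\<close> US by blast
  qed
  ultimately show "\<exists>T. openin (subtopology (product_topology (\<lambda>_. euclideanreal) A) S) T \<and>
      \<omega>0 \<in> T \<and> T \<subseteq> U"
    by blast
qed

lemma openin_dist_if_openin_pointwise:
  fixes S :: "('a \<Rightarrow> real) set" and d :: "('a \<Rightarrow> real) \<Rightarrow> ('a \<Rightarrow> real) \<Rightarrow> ereal"
  assumes S: "S \<subseteq> extensional A"
    and eval: "\<And>a r. a \<in> A \<Longrightarrow> 0 < r \<Longrightarrow>
      \<exists>e>0. \<forall>\<omega>0\<in>S. \<forall>\<omega>\<in>S. d \<omega>0 \<omega> < ereal e \<longrightarrow> \<bar>\<omega>0 a - \<omega> a\<bar> < r"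
    and "openin (subtopology (product_topology (\<lambda>_. euclideanreal) A) S) U"
  shows "openin (dist_topology S d) U"
proof -
  obtain W where W: "openin (product_topology (\<lambda>_. euclideanreal) A) W" and U: "U = W \<inter> S"
    using assms(3) unfolding openin_subtopology by blast
  have "\<exists>e>0. \<forall>\<omega>\<in>S. d \<omega>0 \<omega> < ereal e \<longrightarrow> \<omega> \<in> U" if \<omega>0: "\<omega>0 \<in> U" for \<omega>0
  proof -
    obtain V where V_fin: "finite {a \<in> A. V a \<noteq> topspace euclideanreal}"
      and V_open: "\<forall>a\<in>A. openin euclideanreal (V a)" and "\<omega>0 \<in> PiE A V" and V_W: "PiE A V \<subseteq> W"
      using W \<omega>0 U unfolding openin_product_topology_alt by blast
    define J where "J = {a \<in> A. V a \<noteq> topspace euclideanreal}"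
    have "finite J" using V_fin by (simp add: J_def)
    have radius: "\<exists>e>0. \<forall>\<omega>. d \<omega>0 \<omega> < ereal e \<longrightarrow> \<omega> \<in> S \<longrightarrow> \<omega> a \<in> V a" if a: "a \<in> J" for a
    proof -
      have "open (V a)" "\<omega>0 a \<in> V a"
        using V_open \<open>\<omega>0 \<in> PiE A V\<close> a by (auto simp: J_def PiE_def)
      then obtain r where "r > 0" and r: "ball (\<omega>0 a) r \<subseteq> V a"
        using open_contains_ball by blast
      obtain e where "e > 0" and e: "\<forall>\<omega>0'\<in>S. \<forall>\<omega>\<in>S. d \<omega>0' \<omega> < ereal e \<longrightarrow> \<bar>\<omega>0' a - \<omega> a\<bar> < r"
        using eval[OF _ \<open>r > 0\<close>, of a] a by (auto simp: J_def)
      then show ?thesis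
        using \<open>e > 0\<close> \<omega>0 U r by (intro exI[of _ e]) (auto simp: dist_real_def)
    qed
    have "\<exists>e>0. \<forall>\<omega>. d \<omega>0 \<omega> < ereal e \<longrightarrow> (\<forall>a\<in>J. \<omega> \<in> S \<longrightarrow> \<omega> a \<in> V a)"
      using \<open>finite J\<close> radius by (rule ex_common_radius)
    then obtain e where "e > 0"
      and e: "\<forall>\<omega>. d \<omega>0 \<omega> < ereal e \<longrightarrow> (\<forall>a\<in>J. \<omega> \<in> S \<longrightarrow> \<omega> a \<in> V a)"
      by blast
    have "\<omega> \<in> U" if \<omega>: "\<omega> \<in> S" "d \<omega>0 \<omega> < ereal e" for \<omega>
    proof -
      have "\<omega> a \<in> V a" if "a \<in> A" for a
        using e \<omega> that by (cases "a \<in> J") (auto simp: J_def)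
      then show ?thesis
        using S \<omega>(1) V_W U by (auto simp: PiE_def)
    qed
    then show ?thesis using \<open>e > 0\<close> by blast
  qed
  then show ?thesis
    unfolding openin_dist_topology using U by blast
qed

lemma dist_topology_eq_pointwise_topology:
  fixes S :: "('a \<Rightarrow> real) set" and d :: "('a \<Rightarrow> real) \<Rightarrow> ('a \<Rightarrow> real) \<Rightarrow> ereal"
  assumes "S \<subseteq> extensional A"
    and "\<And>a r. a \<in> A \<Longrightarrow> 0 < r \<Longrightarrow>
      \<exists>e>0. \<forall>\<omega>0\<in>S. \<forall>\<omega>\<in>S. d \<omega>0 \<omega> < ereal e \<longrightarrow> \<bar>\<omega>0 a - \<omega> a\<bar> < r"
    and "\<And>e. 0 < e \<Longrightarrow> \<exists>F \<delta>. finite F \<and> F \<subseteq> A \<and> 0 < \<delta> \<and>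
      (\<forall>\<omega>0\<in>S. \<forall>\<omega>\<in>S. (\<forall>a\<in>F. \<bar>\<omega>0 a - \<omega> a\<bar> < \<delta>) \<longrightarrow> d \<omega>0 \<omega> < ereal e)"
  shows "dist_topology S d = subtopology (product_topology (\<lambda>_. euclideanreal) A) S"
  unfolding topology_eq
  using openin_pointwise_if_openin_dist[OF assms(1,3)] openin_dist_if_openin_pointwise[OF assms(1,2)]
  by blast


section \<open>Total boundedness of the Lip-ball modulo scalars\<close>

lemma finite_net_of_finite_signature:
  assumes "finite (\<kappa> ` B)" and "\<And>b b'. b \<in> B \<Longrightarrow> b' \<in> B \<Longrightarrow> \<kappa> b = \<kappa> b' \<Longrightarrow> R b b'"
  shows "\<exists>F. finite F \<and> F \<subseteq> B \<and> (\<forall>b\<in>B. \<exists>b'\<in>F. R b b')"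
proof -
  define rep where "rep k = (SOME b. b \<in> B \<and> \<kappa> b = k)" for k
  have rep: "rep (\<kappa> b) \<in> B \<and> \<kappa> (rep (\<kappa> b)) = \<kappa> b" if "b \<in> B" for b
  proof -
    have "\<exists>b'. b' \<in> B \<and> \<kappa> b' = \<kappa> b" using that by blast
    then show ?thesis unfolding rep_def by (rule someI_ex)
  qed
  show ?thesis
  proof (intro exI conjI ballI)
    show "finite (rep ` \<kappa> ` B)" using assms(1) by simp
    show "rep ` \<kappa> ` B \<subseteq> B" using rep by auto
    fix b assume b: "b \<in> B"
    have "R b (rep (\<kappa> b))"
      using rep[OF b] by (intro assms(2)[OF b]) simp_all
    then show "\<exists>b'\<in>rep ` \<kappa> ` B. R b b'" using b by blast
  qed
qed

lemma grid_point_approx: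
  fixes G :: nat
  assumes "x \<in> {0..1}" "1 \<le> G"
  shows "\<lfloor>x * real G\<rfloor> \<in> {0..int G}" "\<bar>x - of_int \<lfloor>x * real G\<rfloor> / real G\<bar> \<le> 1 / real G"
proof -
  have G: "0 < real G" using assms(2) by simp
  have "0 \<le> x * real G" "x * real G \<le> real G"
    using assms(1) G by (auto simp: mult_left_le_one_le)
  then show "\<lfloor>x * real G\<rfloor> \<in> {0..int G}"
    by (auto simp: floor_le_iff)
  have "0 \<le> x * real G - of_int \<lfloor>x * real G\<rfloor>" "x * real G - of_int \<lfloor>x * real G\<rfloor> \<le> 1"
    by linarith+
  then have "\<bar>x * real G - of_int \<lfloor>x * real G\<rfloor>\<bar> / real G \<le> 1 / real G"
    using G by (intro divide_right_mono) auto
  moreover have "\<bar>x * real G - of_int \<lfloor>x * real G\<rfloor>\<bar> / real G = \<bar>x - of_int \<lfloor>x * real G\<rfloor> / real G\<bar>"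
    using G by (simp add: field_simps abs_divide[symmetric])
  ultimately show "\<bar>x - of_int \<lfloor>x * real G\<rfloor> / real G\<bar> \<le> 1 / real G" by simp
qed

lemma dist_less_if_floor_divide_eq:
  fixes u v \<eta> :: real
  assumes "0 < \<eta>" "\<lfloor>u / \<eta>\<rfloor> = \<lfloor>v / \<eta>\<rfloor>"
  shows "\<bar>u - v\<bar> < \<eta>"
proof -
  have "\<bar>u / \<eta> - v / \<eta>\<bar> < 1"
    using assms(2) floor_correct[of "u / \<eta>"] floor_correct[of "v / \<eta>"] by linarith
  then show ?thesis
    using assms(1) by (simp add: diff_divide_distrib[symmetric] abs_divide)
qed

lemma floor_divide_in_range:
  fixes u K \<eta> :: real
  assumes "0 < \<eta>" "\<bar>u\<bar> \<le> K"
  shows "\<lfloor>u / \<eta>\<rfloor> \<in> {\<lfloor>- K / \<eta>\<rfloor>..\<lfloor>K / \<eta>\<rfloor>}"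
proof -
  have "- K / \<eta> \<le> u / \<eta>" "u / \<eta> \<le> K / \<eta>"
    using assms divide_right_mono[of "- K" u \<eta>] divide_right_mono[of u K \<eta>] by (simp_all add: abs_le_iff)
  then show ?thesis by (simp add: floor_mono)
qed

definition grid_signature :: "nat \<Rightarrow> nat \<Rightarrow> real \<Rightarrow> qhf \<Rightarrow> int \<times> int \<times> int \<Rightarrow> int \<times> int" where
  "grid_signature N G \<eta> b = restrict
     (\<lambda>(p, i, j). (\<lfloor>Re (b (of_int i / real G) (of_int j / real G) p) / \<eta>\<rfloor>,
                  \<lfloor>Im (b (of_int i / real G) (of_int j / real G) p) / \<eta>\<rfloor>))
     ({- int N..int N} \<times> {0..int G} \<times> {0..int G})"

lemma norm_diff_le_near_grid_point:
  assumes b: "b \<in> Sc c" "Lip c b \<le> 1" and b': "b' \<in> Sc c" "Lip c b' \<le> 1"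
    and xy: "x \<in> {0..1}" "y \<in> {0..1}" and g: "gx \<in> {0..1}" "gy \<in> {0..1}"
    and dx: "\<bar>x - gx\<bar> \<le> 1 / real G" and dy: "\<bar>y - gy\<bar> \<le> 1 / real G" and \<eta>: "0 < \<eta>"
    and Re_eq: "\<lfloor>Re (b gx gy p) / \<eta>\<rfloor> = \<lfloor>Re (b' gx gy p) / \<eta>\<rfloor>"
    and Im_eq: "\<lfloor>Im (b gx gy p) / \<eta>\<rfloor> = \<lfloor>Im (b' gx gy p) / \<eta>\<rfloor>"
  shows "norm (b x y p - b' x y p) \<le> 2 * ((real c + 2) / real G) + 2 * \<eta>"
proof -
  have near: "norm (f x y p - f gx gy p) \<le> (real c + 2) / real G" if f: "f \<in> Sc c" "Lip c f \<le> 1" for f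
  proof -
    have "norm (f x y p - f gx gy p) \<le> Lip c f * \<bar>x - gx\<bar> + (real c + 1) * Lip c f * \<bar>y - gy\<bar>"
      using xy g by (intro Sc_lipschitz_on_unit_square[OF f(1)]) auto
    also have "\<dots> \<le> 1 * (1 / real G) + (real c + 1) * 1 * (1 / real G)"
      using Lip_nonneg[OF f(1)] f(2) dx dy by (intro add_mono mult_mono) auto
    finally show ?thesis by (simp add: add_divide_distrib[symmetric] algebra_simps)
  qed
  have "norm (b gx gy p - b' gx gy p) \<le> \<bar>Re (b gx gy p) - Re (b' gx gy p)\<bar> + \<bar>Im (b gx gy p) - Im (b' gx gy p)\<bar>"
    using cmod_le[of "b gx gy p - b' gx gy p"] by simp
  also have "\<dots> \<le> 2 * \<eta>"
    using dist_less_if_floor_divide_eq[OF \<eta> Re_eq] dist_less_if_floor_divide_eq[OF \<eta> Im_eq] by simp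
  finally have "norm (b gx gy p - b' gx gy p) \<le> 2 * \<eta>" .
  moreover have "norm (b x y p - b' x y p) =
      norm ((b x y p - b gx gy p) + (b gx gy p - b' gx gy p) - (b' x y p - b' gx gy p))"
    by simp
  then have "norm (b x y p - b' x y p) \<le>
      norm (b x y p - b gx gy p) + norm (b gx gy p - b' gx gy p) + norm (b' x y p - b' gx gy p)"
    using norm_triangle_ineq4[of "(b x y p - b gx gy p) + (b gx gy p - b' gx gy p)" "b' x y p - b' gx gy p"]
      norm_triangle_ineq[of "b x y p - b gx gy p" "b gx gy p - b' gx gy p"]
    by linarith
  ultimately show ?thesis
    using near[OF b] near[OF b'] by linarith
qed

lemma norm_diff_le_if_same_grid_signature:
  assumes b: "b \<in> Sc c" "Lip c b \<le> 1" and b': "b' \<in> Sc c" "Lip c b' \<le> 1"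
    and G: "1 \<le> G" and \<eta>: "0 < \<eta>" and sig: "grid_signature N G \<eta> b = grid_signature N G \<eta> b'"
    and p: "\<bar>p\<bar> \<le> int N" and xy: "x \<in> {0..1}" "y \<in> {0..1}"
  shows "norm (b x y p - b' x y p) \<le> 2 * ((real c + 2) / real G) + 2 * \<eta>"
proof -
  define i where "i = \<lfloor>x * real G\<rfloor>"
  define j where "j = \<lfloor>y * real G\<rfloor>"
  have i: "i \<in> {0..int G}" "\<bar>x - of_int i / real G\<bar> \<le> 1 / real G"
    using grid_point_approx[OF xy(1) G] unfolding i_def by auto
  have j: "j \<in> {0..int G}" "\<bar>y - of_int j / real G\<bar> \<le> 1 / real G"
    using grid_point_approx[OF xy(2) G] unfolding j_def by auto
  have "grid_signature N G \<eta> b (p, i, j) = grid_signature N G \<eta> b' (p, i, j)"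
    using sig by simp
  then have "\<lfloor>Re (b (of_int i / real G) (of_int j / real G) p) / \<eta>\<rfloor> =
               \<lfloor>Re (b' (of_int i / real G) (of_int j / real G) p) / \<eta>\<rfloor>"
    "\<lfloor>Im (b (of_int i / real G) (of_int j / real G) p) / \<eta>\<rfloor> =
               \<lfloor>Im (b' (of_int i / real G) (of_int j / real G) p) / \<eta>\<rfloor>"
    using p i(1) j(1) by (auto simp: grid_signature_def abs_le_iff)
  moreover have "of_int i / real G \<in> {0..1}" "of_int j / real G \<in> {0..1}"
    using i(1) j(1) G by (auto simp: divide_le_eq)
  ultimately show ?thesis
    using xy i(2) j(2) by (intro norm_diff_le_near_grid_point[OF b b' _ _ _ _ _ _ \<eta>]) auto
qed

lemma norm_ii1_diff_le_if_same_grid_signature: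
  assumes b: "b \<in> Sc c" "Lip c b \<le> 1" and b': "b' \<in> Sc c" "Lip c b' \<le> 1"
    and N: "1 \<le> N" and G: "1 \<le> G" and \<eta>: "0 < \<eta>"
    and sig: "grid_signature N G \<eta> b = grid_signature N G \<eta> b'"
  shows "norm_ii1 (qadd b (qscale (-1) b')) \<le>
           (2 * real N + 1) * (2 * ((real c + 2) / real G) + 2 * \<eta>) + 2 / real N"
proof -
  define d where "d = qadd b (qscale (-1) b')"
  have d: "d \<in> Sc c" unfolding d_def by (intro Sc_qadd Sc_qscale b(1) b'(1))
  have d_eq: "d x y p = b x y p - b' x y p" for x y p
    by (simp add: d_def qadd_def qscale_def)
  define t where "t p = (slice_sup (delta3 b) p + slice_sup (delta3 b') p) / real N" for p
  have t_summable: "t summable_on UNIV"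
    unfolding t_def divide_inverse using Sc_decaying(4)[OF b(1)] Sc_decaying(4)[OF b'(1)]
    by (intro summable_on_cmult_left summable_on_add slice_sup_summable)
  have "norm_ii1 d \<le> (2 * real N + 1) * (2 * ((real c + 2) / real G) + 2 * \<eta>) + infsum t UNIV"
  proof (rule norm_ii1_le_head_tail[OF Sc_decaying(1)[OF d]])
    fix x0 y0 p assume p: "\<bar>p\<bar> \<le> int N"
    obtain x y where xy: "x \<in> {0..1}" "y \<in> {0..1}" and eq: "norm (d x0 y0 p) = norm (d x y p)"
      using norm_periodic_reduce[OF Sc_norm_periodic(1)[OF d]] by blast
    have "norm (d x y p) \<le> 2 * ((real c + 2) / real G) + 2 * \<eta>"
      unfolding d_eq by (rule norm_diff_le_if_same_grid_signature[OF b b' G \<eta> sig p xy])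
    then show "norm (d x0 y0 p) \<le> 2 * ((real c + 2) / real G) + 2 * \<eta>"
      unfolding eq .
  next
    fix x y p assume "int N < \<bar>p\<bar>"
    then have p: "real N \<le> \<bar>real_of_int p\<bar>"
      by (metis of_int_abs of_int_less_iff of_int_of_nat_eq less_imp_le)
    have "norm (d x y p) \<le> norm (b x y p) + norm (b' x y p)"
      unfolding d_eq by (rule norm_triangle_ineq4)
    also have "\<dots> \<le> t p"
      unfolding t_def add_divide_distrib using N p
      by (intro add_mono norm_le_slice_sup_delta3[OF b(1)] norm_le_slice_sup_delta3[OF b'(1)]) auto
    finally show "norm (d x y p) \<le> t p" .
  qed (use t_summable Sc_decaying(4)[OF b(1)] Sc_decaying(4)[OF b'(1)] \<eta> in
        \<open>auto simp: t_def intro!: divide_nonneg_nonneg add_nonneg_nonneg slice_sup_nonneg\<close>)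
  also have "infsum t UNIV = (norm_ii1 (delta3 b) + norm_ii1 (delta3 b')) / real N"
    unfolding t_def norm_ii1_eq_infsum_slice_sup divide_inverse
    using Sc_decaying(4)[OF b(1)] Sc_decaying(4)[OF b'(1)]
    by (simp add: infsum_cmult_left infsum_add slice_sup_summable summable_on_add)
  also have "\<dots> \<le> 2 / real N"
    using norm_ii1_delta_le_Lip(3)[of b c] norm_ii1_delta_le_Lip(3)[of b' c] b(2) b'(2) N
    by (intro divide_right_mono) auto
  finally show ?thesis unfolding d_def by simp
qed

lemma grid_parameters:
  fixes \<epsilon> :: real
  assumes "0 < \<epsilon>"
  obtains N G :: nat and \<eta> :: real where "1 \<le> N" "1 \<le> G" "0 < \<eta>"
    "(2 * real N + 1) * (2 * (K / real G) + 2 * \<eta>) + 2 / real N \<le> \<epsilon>"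
proof -
  obtain N :: nat where N: "max 1 (4 / \<epsilon>) \<le> real N"
    using real_arch_simple by blast
  define \<delta> where "\<delta> = \<epsilon> / (2 * (2 * real N + 1))"
  have \<delta>: "0 < \<delta>" using assms N by (simp add: \<delta>_def)
  obtain G :: nat where G: "max 1 (4 * \<bar>K\<bar> / \<delta>) \<le> real G"
    using real_arch_simple by blast
  have "2 / real N \<le> \<epsilon> / 2"
    using N assms by (simp add: field_simps)
  moreover have "4 * \<bar>K\<bar> \<le> \<delta> * real G"
    using G \<delta> by (simp add: field_simps)
  then have "K / real G \<le> \<delta> / 4"
    using G by (simp add: field_simps)
  then have "2 * (K / real G) + 2 * (\<delta> / 4) \<le> \<delta>"
    by linarith
  then have "(2 * real N + 1) * (2 * (K / real G) + 2 * (\<delta> / 4)) \<le> (2 * real N + 1) * \<delta>"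
    by (intro mult_left_mono) auto
  moreover have "(2 * real N + 1) * \<delta> = \<epsilon> / 2"
    unfolding \<delta>_def by (simp add: field_simps add_pos_pos)
  ultimately have "(2 * real N + 1) * (2 * (K / real G) + 2 * (\<delta> / 4)) + 2 / real N \<le> \<epsilon>"
    by linarith
  moreover have "1 \<le> N" "1 \<le> G" using N G by simp_all
  ultimately show ?thesis using that \<delta> by (meson zero_less_divide_iff zero_less_numeral)
qed

lemma finite_grid_signatures:
  assumes \<eta>: "0 < \<eta>"
  shows "finite (grid_signature N G \<eta> ` {b \<in> Sc c. Lip c b \<le> 1 \<and> b 0 0 0 = 0})"
proof -
  define R where "R = {\<lfloor>- (real c + 2) / \<eta>\<rfloor>..\<lfloor>(real c + 2) / \<eta>\<rfloor>}"
  have "grid_signature N G \<eta> b \<in> PiE ({- int N..int N} \<times> {0..int G} \<times> {0..int G}) (\<lambda>_. R \<times> R)"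
    if b: "b \<in> Sc c" "Lip c b \<le> 1" "b 0 0 0 = 0" for b
  proof -
    have "(real c + 2) * Lip c b \<le> real c + 2"
      using b(2) by (simp add: mult_left_le)
    then have "norm (b x y p) \<le> real c + 2" for x y p
      using norm_le_Lip_if_vanishes_at_origin[OF b(1,3), of x y p] by linarith
    then have "\<lfloor>Re (b x y p) / \<eta>\<rfloor> \<in> R" "\<lfloor>Im (b x y p) / \<eta>\<rfloor> \<in> R" for x y p
      unfolding R_def
      by (rule floor_divide_in_range[OF \<eta> order_trans[OF abs_Re_le_cmod]],
          rule floor_divide_in_range[OF \<eta> order_trans[OF abs_Im_le_cmod]])
    then show ?thesis
      by (auto simp: grid_signature_def)
  qed
  then have "grid_signature N G \<eta> ` {b \<in> Sc c. Lip c b \<le> 1 \<and> b 0 0 0 = 0} \<subseteq>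
      PiE ({- int N..int N} \<times> {0..int G} \<times> {0..int G}) (\<lambda>_. R \<times> R)"
    by blast
  then show ?thesis
    by (rule finite_subset) (simp add: R_def finite_PiE)
qed

lemma recentred_Lip_ball_totally_bounded:
  fixes c :: nat and \<epsilon> :: real
  assumes "0 < \<epsilon>"
  defines "B \<equiv> {b \<in> Asa c. Lip c b \<le> 1 \<and> b 0 0 0 = 0}"
  shows "\<exists>F. finite F \<and> F \<subseteq> B \<and> (\<forall>b\<in>B. \<exists>b'\<in>F. norm_ii1 (qadd b (qscale (-1) b')) \<le> \<epsilon>)"
proof -
  obtain N G :: nat and \<eta> where N: "1 \<le> N" and G: "1 \<le> G" and \<eta>: "0 < \<eta>"
    and bound: "(2 * real N + 1) * (2 * ((real c + 2) / real G) + 2 * \<eta>) + 2 / real N \<le> \<epsilon>"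
    using grid_parameters[OF assms(1)] by blast
  have "B \<subseteq> {b \<in> Sc c. Lip c b \<le> 1 \<and> b 0 0 0 = 0}"
    by (auto simp: B_def Asa_def)
  then have "finite (grid_signature N G \<eta> ` B)"
    using finite_grid_signatures[OF \<eta>, of N G c] by (meson finite_subset image_mono)
  moreover have "norm_ii1 (qadd b (qscale (-1) b')) \<le> \<epsilon>"
    if "b \<in> B" "b' \<in> B" "grid_signature N G \<eta> b = grid_signature N G \<eta> b'" for b b'
    using that norm_ii1_diff_le_if_same_grid_signature[OF _ _ _ _ N G \<eta>, of b c b'] bound
    by (auto simp: B_def Asa_def)
  ultimately show ?thesis
    by (rule finite_net_of_finite_signature)
qed

lemma state_diff_le_if_recentre_near:
  assumes \<omega>0: "\<omega>0 \<in> states c h mu nu" and \<omega>: "\<omega> \<in> states c h mu nu"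
    and a: "a \<in> Asa c" and b': "b' \<in> Asa c"
    and near: "norm_ii1 (qadd (recentre a) (qscale (-1) b')) \<le> \<epsilon>"
  shows "\<bar>\<omega>0 a - \<omega> a\<bar> \<le> 2 * \<epsilon> + \<bar>\<omega>0 b' - \<omega> b'\<bar>"
proof -
  define d where "d = qadd (recentre a) (qscale (-1) b')"
  have d: "d \<in> Asa c" unfolding d_def by (intro Asa_qadd Asa_qscale recentre_in_Asa a b')
  have "\<omega>0 a - \<omega> a = \<omega>0 d - \<omega> d + (\<omega>0 b' - \<omega> b')"
    using state_recentre[OF \<omega>0 a] state_recentre[OF \<omega> a]
      state_diff[OF \<omega>0 recentre_in_Asa[OF a] b'] state_diff[OF \<omega> recentre_in_Asa[OF a] b']
    by (simp add: d_def)
  moreover have "\<bar>\<omega>0 d\<bar> \<le> \<epsilon>" "\<bar>\<omega> d\<bar> \<le> \<epsilon>"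
    using state_abs_le_norm_ii1[OF \<omega>0 d] state_abs_le_norm_ii1[OF \<omega> d] near
    by (simp_all add: d_def)
  ultimately show ?thesis
    by linarith
qed

lemma weak_neighbourhood_in_rhoL_ball:
  assumes "0 < e"
  shows "\<exists>F \<delta>. finite F \<and> F \<subseteq> Asa c \<and> 0 < \<delta> \<and>
           (\<forall>\<omega>0\<in>states c h mu nu. \<forall>\<omega>\<in>states c h mu nu.
              (\<forall>a\<in>F. \<bar>\<omega>0 a - \<omega> a\<bar> < \<delta>) \<longrightarrow> rhoL c \<omega>0 \<omega> < ereal e)"
proof -
  define B where "B = {b \<in> Asa c. Lip c b \<le> 1 \<and> b 0 0 0 = 0}"
  obtain F where F: "finite F" "F \<subseteq> B"
    and net: "\<forall>b\<in>B. \<exists>b'\<in>F. norm_ii1 (qadd b (qscale (-1) b')) \<le> e / 8"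
    using recentred_Lip_ball_totally_bounded[of "e / 8" c] assms unfolding B_def by auto
  have "rhoL c \<omega>0 \<omega> < ereal e"
    if \<omega>0: "\<omega>0 \<in> states c h mu nu" and \<omega>: "\<omega> \<in> states c h mu nu"
      and close: "\<forall>a\<in>F. \<bar>\<omega>0 a - \<omega> a\<bar> < e / 4" for \<omega>0 \<omega>
  proof -
    have "rhoL c \<omega>0 \<omega> \<le> ereal (e / 2)"
    proof (rule rhoL_le)
      fix a assume a: "a \<in> Asa c" "Lip c a \<le> 1"
      then have "recentre a \<in> B"
        using recentre_in_Asa Lip_recentre recentre_at_origin by (simp add: B_def)
      then obtain b' where "b' \<in> F" and "norm_ii1 (qadd (recentre a) (qscale (-1) b')) \<le> e / 8"
        using net by blast
      moreover have "b' \<in> Asa c"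
        using \<open>b' \<in> F\<close> F(2) by (auto simp: B_def)
      ultimately show "\<bar>\<omega>0 a - \<omega> a\<bar> \<le> e / 2"
        using state_diff_le_if_recentre_near[OF \<omega>0 \<omega> a(1)] close by fastforce
    qed
    also have "\<dots> < ereal e" using assms by simp
    finally show ?thesis .
  qed
  then show ?thesis
    using F assms by (intro exI[of _ F] exI[of _ "e / 4"]) (auto simp: B_def)
qed

lemma evaluation_uniformly_continuous_rhoL:
  assumes a: "a \<in> Asa c" and "0 < r"
  shows "\<exists>e>0. \<forall>\<omega>0\<in>states c h mu nu. \<forall>\<omega>\<in>states c h mu nu.
           rhoL c \<omega>0 \<omega> < ereal e \<longrightarrow> \<bar>\<omega>0 a - \<omega> a\<bar> < r"
proof (intro exI conjI ballI impI)
  have L: "0 \<le> Lip c a" by (rule Lip_nonneg[OF Asa_Sc[OF a]])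
  then show "0 < r / (Lip c a + 1)" using \<open>0 < r\<close> by simp
  fix \<omega>0 \<omega> assume "\<omega>0 \<in> states c h mu nu" "\<omega> \<in> states c h mu nu"
    and "rhoL c \<omega>0 \<omega> < ereal (r / (Lip c a + 1))"
  then have "\<bar>\<omega>0 a - \<omega> a\<bar> \<le> Lip c a * (r / (Lip c a + 1))"
    by (rule state_diff_le_Lip_rhoL[OF _ _ a])
  also have "\<dots> < r"
    using L \<open>0 < r\<close> by (simp add: field_simps)
  finally show "\<bar>\<omega>0 a - \<omega> a\<bar> < r" .
qed

theorem mainTheorem5:
  fixes c :: nat and h mu nu :: real
  assumes "c > 0" and "mu\<^sup>2 + nu\<^sup>2 \<noteq> 0"
  shows "(\<forall>a\<in>Asa c. \<forall>b\<in>Asa c. Lip c (qadd a b) \<le> Lip c a + Lip c b)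
       \<and> (\<forall>r. \<forall>a\<in>Asa c. Lip c (qscale r a) = \<bar>r\<bar> * Lip c a)
       \<and> (\<forall>a\<in>Asa c. Lip c a = 0 \<longleftrightarrow> (\<exists>r. a = qscale r qI))
       \<and> (\<forall>\<omega>1\<in>states c h mu nu. \<forall>\<omega>2\<in>states c h mu nu. rhoL c \<omega>1 \<omega>2 < \<infinity>)
       \<and> dist_topology (states c h mu nu) (rhoL c) = weak_star_topology c (states c h mu nu)"
proof (intro conjI ballI allI)
  show "Lip c (qadd a b) \<le> Lip c a + Lip c b" if "a \<in> Asa c" "b \<in> Asa c" for a b
    using that by (intro Lip_qadd_le Asa_Sc)
  show "Lip c (qscale r a) = \<bar>r\<bar> * Lip c a" if "a \<in> Asa c" for r a
    using that by (intro Lip_qscale Asa_Sc)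
  show "Lip c a = 0 \<longleftrightarrow> (\<exists>r. a = qscale r qI)" if "a \<in> Asa c" for a
    using that by (rule Lip_eq_0_iff)
  show "rhoL c \<omega>1 \<omega>2 < \<infinity>" if "\<omega>1 \<in> states c h mu nu" "\<omega>2 \<in> states c h mu nu" for \<omega>1 \<omega>2
    using that by (rule rhoL_finite)
  show "dist_topology (states c h mu nu) (rhoL c) = weak_star_topology c (states c h mu nu)"
    unfolding weak_star_topology_def
  proof (rule dist_topology_eq_pointwise_topology)
    show "states c h mu nu \<subseteq> extensional (Asa c)"
      using state_extensional by blast
  qed (fact evaluation_uniformly_continuous_rhoL weak_neighbourhood_in_rhoL_ball)+
qed

end
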